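(* Let $a\in\mathbb{R}$, $\delta>0$, and let $N\in\mathbb{N}$ satisfy $a-(n\pi)^2<-\delta$ for all $n>N$. Suppose $L=[\ell_0\ \ell_1\ \ldots\ \ell_N]^\top\in\mathbb{R}^{N+1}$ is such that there exists a positive-definite $Q\in\mathbb{R}^{(N+1)\times(N+1)}$ with $$Q(A+LC)+(A+LC)^\top Q<-2\delta Q.$$ Then for any initial value $\tilde\epsilon(\cdot,0)\in L^2(0,1)$ there exists a unique solution $\tilde\epsilon\in C([0,\infty);L^2(0,1))$ of $$\tilde\epsilon_t=\tilde\epsilon_{xx}+a\tilde\epsilon+\mathcal L(x)\tilde\epsilon(0,t),\quad \tilde\epsilon_x(0,t)=0,\quad \tilde\epsilon_x(1,t)=0,$$ and there is $M_2>0$ such that $\|\tilde\epsilon(\cdot,t)\|_{L^2(0,1)}\le M_2e^{-\delta t}\|\tilde\epsilon(\cdot,0)\|_{L^2(0,1)}$ for all $t\ge0$.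
   Context: $\lambda_n=(n\pi)^2$, $\phi_0\equiv1$, $\phi_n(x)=\sqrt2\cos(n\pi x)$ ($n\ge1$); $A=\mathrm{diag}(a-\lambda_0,\ldots,a-\lambda_N)$, $C=[1\ \sqrt2\ \ldots\ \sqrt2]\in\mathbb{R}^{1\times(N+1)}$, and $\mathcal L(x)=\sum_{n=0}^N\ell_n\phi_n(x)$. *)

theory Defs
  imports "HOL-Analysis.Analysis"
begin

text \<open>Neumann eigenvalues and orthonormal eigenfunctions on (0,1).\<close>
definition lam :: "nat \<Rightarrow> real" where
  "lam n = (real n * pi)^2"

definition phi :: "nat \<Rightarrow> real \<Rightarrow> real" where
  "phi n x = (if n = 0 then 1 else sqrt 2 * cos (real n * pi * x))"

text \<open>Matrices of size (N+1)x(N+1) as functions nat => nat => real, indices 0..N.\<close>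
definition Amat :: "real \<Rightarrow> nat \<Rightarrow> nat \<Rightarrow> real" where
  "Amat a i j = (if i = j then a - lam i else 0)"

definition Cvec :: "nat \<Rightarrow> real" where
  "Cvec j = (if j = 0 then 1 else sqrt 2)"

definition ALC :: "real \<Rightarrow> (nat \<Rightarrow> real) \<Rightarrow> nat \<Rightarrow> nat \<Rightarrow> real" where
  "ALC a l i j = Amat a i j + l i * Cvec j"

definition mmul :: "nat \<Rightarrow> (nat \<Rightarrow> nat \<Rightarrow> real) \<Rightarrow> (nat \<Rightarrow> nat \<Rightarrow> real) \<Rightarrow> nat \<Rightarrow> nat \<Rightarrow> real" where
  "mmul N P R i j = (\<Sum>k\<le>N. P i k * R k j)"

definition transp_mat :: "(nat \<Rightarrow> nat \<Rightarrow> real) \<Rightarrow> nat \<Rightarrow> nat \<Rightarrow> real" where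
  "transp_mat P i j = P j i"

definition quad :: "nat \<Rightarrow> (nat \<Rightarrow> nat \<Rightarrow> real) \<Rightarrow> (nat \<Rightarrow> real) \<Rightarrow> real" where
  "quad N M x = (\<Sum>i\<le>N. \<Sum>j\<le>N. x i * M i j * x j)"

definition pos_def :: "nat \<Rightarrow> (nat \<Rightarrow> nat \<Rightarrow> real) \<Rightarrow> bool" where
  "pos_def N M \<longleftrightarrow> (\<forall>i\<le>N. \<forall>j\<le>N. M i j = M j i) \<and>
     (\<forall>x::nat \<Rightarrow> real. (\<exists>i\<le>N. x i \<noteq> 0) \<longrightarrow> quad N M x > 0)"

definition mat_less :: "nat \<Rightarrow> (nat \<Rightarrow> nat \<Rightarrow> real) \<Rightarrow> (nat \<Rightarrow> nat \<Rightarrow> real) \<Rightarrow> bool" where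
  "mat_less N X Y \<longleftrightarrow> pos_def N (\<lambda>i j. Y i j - X i j)"

definition Lfun :: "nat \<Rightarrow> (nat \<Rightarrow> real) \<Rightarrow> real \<Rightarrow> real" where
  "Lfun N l x = (\<Sum>n\<le>N. l n * phi n x)"

definition L2 :: "(real \<Rightarrow> real) \<Rightarrow> bool" where
  "L2 f \<longleftrightarrow> f measurable_on {0..1} \<and> (\<lambda>x. (f x)^2) integrable_on {0..1}"

definition L2norm :: "(real \<Rightarrow> real) \<Rightarrow> real" where
  "L2norm f = sqrt (integral {0..1} (\<lambda>x. (f x)^2))"

text \<open>Solution in C([0,\<infinity>); L^2(0,1)) of
  e_t = e_xx + a e + L(x) e(0,t),  e_x(0,t) = e_x(1,t) = 0,  e(.,0) = e0,
  in the modal (weak, tested against the Neumann eigenfunctions phi_n) sense.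
  The state is \<open>e x t\<close>.  For t > 0 the state is required to be continuous in x on [0,1]
  so that the point value e(0,t) is meaningful.\<close>
definition is_solution :: "real \<Rightarrow> nat \<Rightarrow> (nat \<Rightarrow> real) \<Rightarrow> (real \<Rightarrow> real) \<Rightarrow> (real \<Rightarrow> real \<Rightarrow> real) \<Rightarrow> bool" where
  "is_solution a N l e0 e \<longleftrightarrow>
     (\<forall>t\<ge>0. L2 (\<lambda>x. e x t)) \<and>
     (\<forall>t0\<ge>0. ((\<lambda>t. L2norm (\<lambda>x. e x t - e x t0)) \<longlongrightarrow> 0) (at t0 within {0..})) \<and>
     L2norm (\<lambda>x. e x 0 - e0 x) = 0 \<and>
     (\<forall>t>0. continuous_on {0..1} (\<lambda>x. e x t)) \<and>
     (\<forall>n. \<forall>t>0. ((\<lambda>s. integral {0..1} (\<lambda>x. e x s * phi n x)) has_real_derivative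
         (a - lam n) * integral {0..1} (\<lambda>x. e x t * phi n x)
         + e 0 t * integral {0..1} (\<lambda>x. Lfun N l x * phi n x)) (at t))"

end

(*
  The cosines phi_n form a complete orthonormal system of L^2(0,1): orthonormality
  is a direct computation, completeness follows from Weierstrass approximation after the
  substitution y = cos (pi x), extended from continuous to all square-integrable functions by
  density (indicators of closed sets, then of measurable sets, then bounded and finally L^2
  functions). Testing the equation against phi_n gives the modal system
  c_n' = (a - lambda_n) c_n + l_n e(0,t), where l_n = 0 for n > N.

  The tail modes n > N are decoupled and decay faster than exp (-delta t). The head modes
  p = (c_0, ..., c_N) solve p' = (A + L C) p + L w(t), where w is the trace at x = 0 of the
  tail. The Lyapunov function p^T Q p decays at rate 2 delta up to a contribution of the input
  that is controlled by the integral of exp (2 delta t) w(t)^2, which is bounded by a multiple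
  of the initial energy although w itself is singular at t = 0.

  Existence: the head part z of the trace solves a scalar Volterra equation (Picard iteration),
  and the modes are then given by the variation of constants formula. Uniqueness: the modes
  of the difference of two solutions vanish, the tail ones trivially and the head ones by the
  Lyapunov estimate with zero input.
*)

theory Submission
  imports Defs
begin

section \<open>Square-integrable functions on the unit interval\<close>

lemma L2_iff_borel_measurable:
  "L2 f \<longleftrightarrow> f \<in> borel_measurable (lebesgue_on {0..1}) \<and> (\<lambda>x. (f x)^2) integrable_on {0..1}"
  unfolding L2_def by (simp add: measurable_on_iff_borel_measurable)

lemma L2_borel_measurable: "L2 f \<Longrightarrow> f \<in> borel_measurable (lebesgue_on {0..1})"
  by (simp add: L2_iff_borel_measurable)

lemma L2_square_integrable: "L2 f \<Longrightarrow> (\<lambda>x. (f x)^2) integrable_on {0..1}"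
  by (simp add: L2_iff_borel_measurable)

lemma L2_product_integrable:
  assumes "L2 f" "L2 g"
  shows "(\<lambda>x. f x * g x) integrable_on {0..1}"
proof (rule measurable_bounded_by_integrable_imp_integrable_real)
  show "(\<lambda>x. f x * g x) \<in> borel_measurable (lebesgue_on {0..1})"
    using assms by (simp add: L2_borel_measurable borel_measurable_times)
  show "(\<lambda>x. ((f x)^2 + (g x)^2) / 2) integrable_on {0..1}"
    using assms by (intro integrable_on_divide integrable_add L2_square_integrable)
  show "\<bar>f x * g x\<bar> \<le> ((f x)^2 + (g x)^2) / 2" for x
    using sum_squares_bound[of "\<bar>f x\<bar>" "\<bar>g x\<bar>"] by (simp add: abs_mult)
qed simp

lemma L2_add: "L2 f \<Longrightarrow> L2 g \<Longrightarrow> L2 (\<lambda>x. f x + g x)"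
  unfolding L2_iff_borel_measurable power2_sum
  by (auto intro!: integrable_add L2_product_integrable integrable_on_mult_right
      simp: L2_iff_borel_measurable mult.assoc)

lemma L2_cmult: "L2 f \<Longrightarrow> L2 (\<lambda>x. c * f x)"
  unfolding L2_iff_borel_measurable power_mult_distrib
  by (auto intro!: integrable_on_mult_right borel_measurable_times)

lemma L2_diff: "L2 f \<Longrightarrow> L2 g \<Longrightarrow> L2 (\<lambda>x. f x - g x)"
  using L2_add[of f "\<lambda>x. - 1 * g x"] L2_cmult[of g "- 1"] by simp

lemma L2_sum: "finite A \<Longrightarrow> (\<And>i. i \<in> A \<Longrightarrow> L2 (f i)) \<Longrightarrow> L2 (\<lambda>x. \<Sum>i\<in>A. f i x)"
proof (induction A rule: finite_induct)
  case empty
  then show ?case by (simp add: L2_iff_borel_measurable integrable_0)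
qed (simp add: L2_add)

lemma continuous_on_imp_L2: "continuous_on {0..1} f \<Longrightarrow> L2 f"
  unfolding L2_iff_borel_measurable
  by (auto intro!: integrable_continuous_interval continuous_intros integrable_imp_measurable)

lemma L2_bounded_measurable:
  assumes "f \<in> borel_measurable (lebesgue_on {0..1})" "\<And>x. x \<in> {0..1} \<Longrightarrow> \<bar>f x\<bar> \<le> B"
  shows "L2 f"
  unfolding L2_iff_borel_measurable
proof (intro conjI assms)
  show "(\<lambda>x. (f x)^2) integrable_on {0..1}"
  proof (rule measurable_bounded_by_integrable_imp_integrable_real)
    show "(\<lambda>x. (f x)^2) \<in> borel_measurable (lebesgue_on {0..1})" using assms(1) by measurable
    show "(\<lambda>x. B^2) integrable_on {0..1::real}" by (rule integrable_const_ivl)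
    show "\<bar>(f x)^2\<bar> \<le> B^2" if "x \<in> {0..1}" for x
      using power_mono[OF assms(2)[OF that], of 2] by simp
  qed simp
qed

lemma L2_indicator: "S \<in> sets lebesgue \<Longrightarrow> L2 (indicator S :: real \<Rightarrow> real)"
  by (rule L2_bounded_measurable[where B = 1])
     (auto intro: measurable_restrict_space1 borel_measurable_indicator simp: indicator_def)

lemma continuous_on_phi: "continuous_on A (phi n)"
  unfolding phi_def[abs_def] by (cases "n = 0") (auto intro!: continuous_intros)

lemma L2_phi: "L2 (phi n)"
  by (rule continuous_on_imp_L2[OF continuous_on_phi])

lemma abs_phi_le: "\<bar>phi n x\<bar> \<le> sqrt 2"
  using abs_cos_le_one[of "real n * pi * x"] by (auto simp: phi_def abs_mult mult_left_le)

lemma phi_at_0: "phi n 0 = Cvec n"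
  by (simp add: phi_def Cvec_def)

definition inner_L2 :: "(real \<Rightarrow> real) \<Rightarrow> (real \<Rightarrow> real) \<Rightarrow> real" where
  "inner_L2 f g = integral {0..1} (\<lambda>x. f x * g x)"

abbreviation sqdist_L2 :: "(real \<Rightarrow> real) \<Rightarrow> (real \<Rightarrow> real) \<Rightarrow> real" where
  "sqdist_L2 f g \<equiv> inner_L2 (\<lambda>x. f x - g x) (\<lambda>x. f x - g x)"

lemma inner_L2_commute: "inner_L2 f g = inner_L2 g f"
  unfolding inner_L2_def by (simp add: mult.commute)

lemma inner_L2_add_left:
  "L2 f \<Longrightarrow> L2 g \<Longrightarrow> L2 h \<Longrightarrow> inner_L2 (\<lambda>x. f x + g x) h = inner_L2 f h + inner_L2 g h"
  unfolding inner_L2_def distrib_right by (intro integral_add L2_product_integrable)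

lemma inner_L2_diff_left:
  "L2 f \<Longrightarrow> L2 g \<Longrightarrow> L2 h \<Longrightarrow> inner_L2 (\<lambda>x. f x - g x) h = inner_L2 f h - inner_L2 g h"
  unfolding inner_L2_def left_diff_distrib by (intro integral_diff L2_product_integrable)

lemma inner_L2_diff_right:
  "L2 f \<Longrightarrow> L2 g \<Longrightarrow> L2 h \<Longrightarrow> inner_L2 h (\<lambda>x. f x - g x) = inner_L2 h f - inner_L2 h g"
  using inner_L2_diff_left[of f g h] by (simp add: inner_L2_commute)

lemma inner_L2_add_right:
  "L2 f \<Longrightarrow> L2 g \<Longrightarrow> L2 h \<Longrightarrow> inner_L2 h (\<lambda>x. f x + g x) = inner_L2 h f + inner_L2 h g"
  using inner_L2_add_left[of f g h] by (simp add: inner_L2_commute)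

lemma inner_L2_cmult_left: "inner_L2 (\<lambda>x. c * f x) h = c * inner_L2 f h"
  unfolding inner_L2_def by (simp add: mult.assoc)

lemma inner_L2_sum_left:
  "finite A \<Longrightarrow> (\<And>i. i \<in> A \<Longrightarrow> L2 (f i)) \<Longrightarrow> L2 h \<Longrightarrow>
    inner_L2 (\<lambda>x. \<Sum>i\<in>A. f i x) h = (\<Sum>i\<in>A. inner_L2 (f i) h)"
  by (induction A rule: finite_induct) (auto simp: inner_L2_def[of "\<lambda>x. 0"] inner_L2_add_left L2_sum)

lemma inner_L2_self_nonneg: "0 \<le> inner_L2 f f"
  unfolding inner_L2_def
  by (cases "(\<lambda>x. f x * f x) integrable_on {0..1}")
     (auto intro: integral_nonneg simp: not_integrable_integral)

lemma L2norm_eq_sqrt_inner_L2: "L2norm f = sqrt (inner_L2 f f)"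
  unfolding L2norm_def inner_L2_def by (simp add: power2_eq_square)

lemma inner_L2_Young:
  assumes "L2 f" "L2 g" "e > 0"
  shows "\<bar>inner_L2 f g\<bar> \<le> (e * inner_L2 f f + inner_L2 g g / e) / 2"
proof -
  have ff: "(\<lambda>x. f x * f x) integrable_on {0..1}" and gg: "(\<lambda>x. g x * g x) integrable_on {0..1}"
    using L2_product_integrable assms by blast+
  have pointwise: "\<bar>f x * g x\<bar> \<le> (e * (f x * f x) + g x * g x / e) / 2" for x
  proof -
    have "0 \<le> (sqrt e * \<bar>f x\<bar> - \<bar>g x\<bar> / sqrt e)^2" by simp
    also have "\<dots> = (sqrt e * sqrt e) * (f x * f x) + g x * g x / (sqrt e * sqrt e)
        - 2 * (sqrt e / sqrt e) * \<bar>f x * g x\<bar>"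
      by (simp add: power2_eq_square algebra_simps abs_mult abs_mult_self_eq)
    finally show ?thesis using assms(3) by simp
  qed
  have "norm (integral {0..1} (\<lambda>x. f x * g x))
      \<le> integral {0..1} (\<lambda>x. (e * (f x * f x) + g x * g x / e) / 2)"
    using pointwise
    by (intro integral_norm_bound_integral L2_product_integrable assms integrable_on_divide
        integrable_add integrable_on_mult_right ff gg) auto
  then have "\<bar>inner_L2 f g\<bar> \<le> integral {0..1} (\<lambda>x. (e * (f x * f x) + g x * g x / e) / 2)"
    by (simp add: inner_L2_def)
  also have "\<dots> = (e * inner_L2 f f + inner_L2 g g / e) / 2"
    unfolding inner_L2_def using ff gg
    by (simp add: integral_add integral_divide integrable_on_mult_right integrable_on_divide)
  finally show ?thesis .
qed

lemma inner_L2_eq_0_if_self_eq_0: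
  assumes "L2 f" "L2 g" "inner_L2 f f = 0"
  shows "inner_L2 f g = 0"
proof -
  have "\<bar>inner_L2 f g\<bar> \<le> 0 + \<epsilon>" if "\<epsilon> > 0" for \<epsilon>
  proof -
    define e where "e = (inner_L2 g g + 1) / \<epsilon>"
    have B: "inner_L2 g g \<ge> 0" by (rule inner_L2_self_nonneg)
    then have "e > 0" using that by (simp add: e_def)
    then have "\<bar>inner_L2 f g\<bar> \<le> inner_L2 g g / e / 2"
      using inner_L2_Young[OF assms(1,2)] assms(3) by simp
    also have "\<dots> \<le> \<epsilon>" using that B by (simp add: e_def field_simps)
    finally show ?thesis by simp
  qed
  then show ?thesis using field_le_epsilon[of "\<bar>inner_L2 f g\<bar>" 0] by simp
qed

lemma inner_L2_Cauchy_Schwarz: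
  assumes "L2 f" "L2 g"
  shows "\<bar>inner_L2 f g\<bar> \<le> sqrt (inner_L2 f f) * sqrt (inner_L2 g g)"
proof (cases "inner_L2 f f = 0 \<or> inner_L2 g g = 0")
  case True
  then have "inner_L2 f g = 0"
    using inner_L2_eq_0_if_self_eq_0 assms inner_L2_commute[of f g] by metis
  then show ?thesis by (simp add: inner_L2_self_nonneg)
next
  case False
  let ?A = "inner_L2 f f" and ?B = "inner_L2 g g"
  have A: "?A > 0" and B: "?B > 0" using False inner_L2_self_nonneg[of f] inner_L2_self_nonneg[of g] by auto
  have "\<bar>inner_L2 f g\<bar> \<le> (sqrt ?B / sqrt ?A * ?A + ?B / (sqrt ?B / sqrt ?A)) / 2"
    using A B by (intro inner_L2_Young assms) simp
  also have "\<dots> = sqrt ?A * sqrt ?B"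
    using A B by (simp add: field_simps real_sqrt_mult[symmetric])
  finally show ?thesis .
qed

lemma sqdist_L2_expand:
  assumes "L2 f" "L2 g"
  shows "sqdist_L2 f g = inner_L2 f f - 2 * inner_L2 f g + inner_L2 g g"
  using assms by (simp add: inner_L2_diff_left inner_L2_diff_right L2_diff inner_L2_commute[of g f])

lemma sqdist_L2_triangle:
  assumes "L2 f" "L2 g" "L2 h"
  shows "sqdist_L2 f h \<le> 2 * sqdist_L2 f g + 2 * sqdist_L2 g h"
proof -
  define u where "u x = f x - g x" for x
  define v where "v x = h x - g x" for x
  have L: "L2 u" "L2 v" unfolding u_def[abs_def] v_def[abs_def] using assms by (auto intro: L2_diff)
  have "sqdist_L2 f h = sqdist_L2 u v" "sqdist_L2 f g = inner_L2 u u" "sqdist_L2 g h = inner_L2 v v"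
    by (simp_all add: u_def v_def inner_L2_def algebra_simps)
  moreover have "0 \<le> inner_L2 (\<lambda>x. u x + v x) (\<lambda>x. u x + v x)" by (rule inner_L2_self_nonneg)
  moreover have "inner_L2 (\<lambda>x. u x + v x) (\<lambda>x. u x + v x) = inner_L2 u u + 2 * inner_L2 u v + inner_L2 v v"
    using L by (simp add: inner_L2_add_left inner_L2_add_right L2_add inner_L2_commute[of v u])
  ultimately show ?thesis using sqdist_L2_expand[OF L] by linarith
qed

lemma sqdist_L2_le_if_abs_le:
  assumes "L2 f" "L2 g" "\<And>x. x \<in> {0..1} \<Longrightarrow> \<bar>f x - g x\<bar> \<le> \<epsilon>"
  shows "sqdist_L2 f g \<le> \<epsilon>^2"
proof -
  have "sqdist_L2 f g \<le> integral {0..1::real} (\<lambda>x. \<epsilon>^2)"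
    unfolding inner_L2_def
  proof (rule integral_le)
    show "(\<lambda>x. (f x - g x) * (f x - g x)) integrable_on {0..1}"
      using assms by (intro L2_product_integrable L2_diff)
    show "(f x - g x) * (f x - g x) \<le> \<epsilon>^2" if "x \<in> {0..1}" for x
      using power_mono[OF assms(3)[OF that], of 2] by (simp add: power2_eq_square)
  qed (rule integrable_const_ivl)
  then show ?thesis by simp
qed

lemma integral_cos_nat_pi:
  "integral {0..1} (\<lambda>x. cos (real k * pi * x)) = (if k = 0 then 1 else 0)"
proof (cases "k = 0")
  case False
  have "((\<lambda>x. cos (real k * pi * x)) has_integral
          sin (real k * pi * 1) / (real k * pi) - sin (real k * pi * 0) / (real k * pi)) {0..1}"
    using False
    by (intro fundamental_theorem_of_calculus)
       (auto intro!: derivative_eq_intros simp: has_real_derivative_iff_has_vector_derivative[symmetric])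
  then show ?thesis using False by (simp add: integral_unique sin_npi)
qed simp

lemma cos_of_nat_diff:
  "cos ((real j - real k) * t) = cos (real (if k \<le> j then j - k else k - j) * t)"
proof (cases "k \<le> j")
  case False
  then have "(real j - real k) * t = - (real (k - j) * t)" by (simp add: of_nat_diff algebra_simps)
  then show ?thesis using False by simp
qed (simp add: of_nat_diff)

lemma integral_cos_cos:
  "integral {0..1} (\<lambda>x. cos (real m * pi * x) * cos (real n * pi * x)) =
     (if m = n then if m = 0 then 1 else 1/2 else 0)"
proof -
  define d where "d = (if n \<le> m then m - n else n - m)"
  define k where "k = m + n"
  have "(\<lambda>x. cos (real m * pi * x) * cos (real n * pi * x)) =
        (\<lambda>x. (cos (real d * pi * x) + cos (real k * pi * x)) / 2)"
    using cos_of_nat_diff[of m n "pi * _"] by (simp add: fun_eq_iff cos_times_cos d_def k_def algebra_simps)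
  moreover have "(\<lambda>x. cos (real j * pi * x)) integrable_on {0..1}" for j
    by (intro integrable_continuous_interval continuous_intros)
  ultimately have "integral {0..1} (\<lambda>x. cos (real m * pi * x) * cos (real n * pi * x)) =
      (integral {0..1} (\<lambda>x. cos (real d * pi * x)) + integral {0..1} (\<lambda>x. cos (real k * pi * x))) / 2"
    by (simp add: integral_add)
  then show ?thesis by (simp only: integral_cos_nat_pi) (auto simp: d_def k_def)
qed

lemma inner_L2_phi_phi: "inner_L2 (phi m) (phi n) = (if m = n then 1 else 0)"
proof -
  have "inner_L2 (phi m) (phi n) = (if m = 0 then 1 else sqrt 2) * (if n = 0 then 1 else sqrt 2) *
          integral {0..1} (\<lambda>x. cos (real m * pi * x) * cos (real n * pi * x))"
    unfolding inner_L2_def phi_def by (simp add: algebra_simps)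
  then show ?thesis by (simp add: integral_cos_cos)
qed

section \<open>Completeness of the cosine system\<close>

definition cos_poly :: "(nat \<Rightarrow> real) \<Rightarrow> nat \<Rightarrow> real \<Rightarrow> real" where
  "cos_poly \<alpha> M x = (\<Sum>n\<le>M. \<alpha> n * phi n x)"

definition neumann_coeff :: "(real \<Rightarrow> real) \<Rightarrow> nat \<Rightarrow> real" where
  "neumann_coeff f n = inner_L2 f (phi n)"

lemma L2_cos_poly: "L2 (cos_poly \<alpha> M)"
  unfolding cos_poly_def[abs_def] by (intro L2_sum L2_cmult L2_phi) auto

lemma continuous_on_cos_poly: "continuous_on A (cos_poly \<alpha> M)"
  unfolding cos_poly_def[abs_def] by (intro continuous_intros continuous_on_mult_left continuous_on_phi)

lemma inner_L2_cos_poly_left: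
  "L2 f \<Longrightarrow> inner_L2 (cos_poly \<alpha> M) f = (\<Sum>n\<le>M. \<alpha> n * inner_L2 (phi n) f)"
  unfolding cos_poly_def[abs_def]
  by (subst inner_L2_sum_left) (auto intro: L2_cmult L2_phi simp: inner_L2_cmult_left)

lemma neumann_coeff_cos_poly: "neumann_coeff (cos_poly \<alpha> M) m = (if m \<le> M then \<alpha> m else 0)"
  by (simp add: neumann_coeff_def inner_L2_cos_poly_left L2_phi inner_L2_phi_phi
      if_distrib[of "\<lambda>x. _ * x"] sum.delta cong: if_cong)

lemma Lfun_eq_cos_poly: "Lfun N l = cos_poly l N"
  by (simp add: Lfun_def cos_poly_def fun_eq_iff)

lemma sqdist_L2_cos_poly:
  assumes "L2 f"
  shows "sqdist_L2 f (cos_poly \<alpha> M)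
       = inner_L2 f f - (\<Sum>n\<le>M. (neumann_coeff f n)^2) + (\<Sum>n\<le>M. (\<alpha> n - neumann_coeff f n)^2)"
proof -
  have "inner_L2 (cos_poly \<alpha> M) (cos_poly \<alpha> M) = (\<Sum>n\<le>M. \<alpha> n * \<alpha> n)"
    using neumann_coeff_cos_poly[of \<alpha> M]
    by (simp add: inner_L2_cos_poly_left L2_cos_poly inner_L2_commute[of "phi _"] neumann_coeff_def)
  moreover have "inner_L2 f (cos_poly \<alpha> M) = (\<Sum>n\<le>M. \<alpha> n * neumann_coeff f n)"
    using assms by (simp add: inner_L2_commute[of f] inner_L2_cos_poly_left neumann_coeff_def)
  moreover have "(\<Sum>n\<le>M. \<alpha> n * \<alpha> n) - 2 * (\<Sum>n\<le>M. \<alpha> n * neumann_coeff f n)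
      = (\<Sum>n\<le>M. (\<alpha> n - neumann_coeff f n)^2) - (\<Sum>n\<le>M. (neumann_coeff f n)^2)"
    by (simp add: power2_diff power2_eq_square sum.distrib sum_subtractf sum_distrib_left algebra_simps)
  ultimately show ?thesis
    using sqdist_L2_expand[OF assms L2_cos_poly] by simp
qed

lemma Bessel_inequality: "L2 f \<Longrightarrow> (\<Sum>n\<le>M. (neumann_coeff f n)^2) \<le> inner_L2 f f"
  using sqdist_L2_cos_poly[of f "neumann_coeff f" M] inner_L2_self_nonneg[of "\<lambda>x. f x - cos_poly (neumann_coeff f) M x"]
  by simp

definition cos_approximable :: "(real \<Rightarrow> real) \<Rightarrow> bool" where
  "cos_approximable f \<longleftrightarrow> (\<forall>e>0. \<exists>M \<alpha>. sqdist_L2 f (cos_poly \<alpha> M) < e)"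

lemma Parseval_if_cos_approximable:
  assumes f: "L2 f" and approx: "cos_approximable f"
  shows "(\<lambda>n. (neumann_coeff f n)^2) sums inner_L2 f f"
proof -
  have "(\<lambda>M. \<Sum>n\<le>M. (neumann_coeff f n)^2) \<longlonglongrightarrow> inner_L2 f f"
  proof (rule LIMSEQ_I)
    fix r :: real assume "r > 0"
    then obtain M \<alpha> where M: "sqdist_L2 f (cos_poly \<alpha> M) < r"
      using approx unfolding cos_approximable_def by blast
    have "norm ((\<Sum>k\<le>n. (neumann_coeff f k)^2) - inner_L2 f f) < r" if "n \<ge> M" for n
    proof -
      have "(\<Sum>k\<le>M. (neumann_coeff f k)^2) \<le> (\<Sum>k\<le>n. (neumann_coeff f k)^2)"
        using that by (intro sum_mono2) auto
      moreover have "0 \<le> (\<Sum>k\<le>M. (\<alpha> k - neumann_coeff f k)^2)" by (simp add: sum_nonneg)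
      ultimately show ?thesis
        using M sqdist_L2_cos_poly[OF f, of \<alpha> M] Bessel_inequality[OF f, of n] by simp
    qed
    then show "\<exists>no. \<forall>n\<ge>no. norm ((\<Sum>k\<le>n. (neumann_coeff f k)^2) - inner_L2 f f) < r" by blast
  qed
  then show ?thesis
    unfolding sums_def using filterlim_sequentially_Suc[of "\<lambda>n. \<Sum>k<n. (neumann_coeff f k)^2"]
    by (simp add: lessThan_Suc_atMost)
qed

lemma cos_approximable_if_close:
  assumes f: "L2 f"
    and close: "\<And>e. e > 0 \<Longrightarrow> \<exists>g. L2 g \<and> cos_approximable g \<and> sqdist_L2 f g < e"
  shows "cos_approximable f"
  unfolding cos_approximable_def
proof (intro allI impI)
  fix e :: real assume "e > 0"
  then obtain g where g: "L2 g" "cos_approximable g" "sqdist_L2 f g < e / 4"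
    using close[of "e / 4"] by auto
  then obtain M \<alpha> where "sqdist_L2 g (cos_poly \<alpha> M) < e / 4"
    using \<open>e > 0\<close> unfolding cos_approximable_def by (meson divide_pos_pos zero_less_numeral)
  then have "sqdist_L2 f (cos_poly \<alpha> M) < e"
    using sqdist_L2_triangle[OF f g(1) L2_cos_poly, of \<alpha> M] g(3) by linarith
  then show "\<exists>M \<alpha>. sqdist_L2 f (cos_poly \<alpha> M) < e" by blast
qed

lemma cos_approximable_if_limit:
  assumes f: "L2 f" and g: "\<And>k. L2 (g k) \<and> cos_approximable (g k)"
    and lim: "(\<lambda>k. sqdist_L2 f (g k)) \<longlonglongrightarrow> 0"
  shows "cos_approximable f"
proof (rule cos_approximable_if_close[OF f])
  fix e :: real assume "e > 0"
  then obtain k where "\<bar>sqdist_L2 f (g k)\<bar> < e"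
    using LIMSEQ_D[OF lim] by fastforce
  then show "\<exists>g. L2 g \<and> cos_approximable g \<and> sqdist_L2 f g < e"
    using g[of k] by auto
qed

lemma sum_atMost_pad:
  fixes K K' :: nat
  shows "(\<Sum>k\<le>K. f k) = (\<Sum>k\<le>max K K'. if k \<le> K then f k else 0)"
  by (rule sum.mono_neutral_cong_right[symmetric]) auto

lemma cos_poly_add:
  "cos_poly \<alpha> M1 x + cos_poly \<beta> M2 x =
     cos_poly (\<lambda>n. (if n \<le> M1 then \<alpha> n else 0) + (if n \<le> M2 then \<beta> n else 0)) (max M1 M2) x"
  unfolding cos_poly_def sum_atMost_pad[where K = M1 and K' = M2]
    sum_atMost_pad[where K = M2 and K' = M1]
  by (simp add: max.commute sum.distrib[symmetric] distrib_right if_distrib[of "\<lambda>y. y * _"] cong: if_cong)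

lemma cos_poly_cmult: "c * cos_poly \<alpha> M x = cos_poly (\<lambda>n. c * \<alpha> n) M x"
  by (simp add: cos_poly_def sum_distrib_left mult.assoc)

lemma cos_approximable_add:
  assumes "L2 f" "L2 g" "cos_approximable f" "cos_approximable g"
  shows "cos_approximable (\<lambda>x. f x + g x)"
  unfolding cos_approximable_def
proof (intro allI impI)
  fix e :: real assume "e > 0"
  then have "e / 4 > 0" by simp
  then obtain M1 \<alpha> M2 \<beta> where M1: "sqdist_L2 f (cos_poly \<alpha> M1) < e / 4"
    and M2: "sqdist_L2 g (cos_poly \<beta> M2) < e / 4"
    using assms(3,4) unfolding cos_approximable_def by blast
  let ?p = "cos_poly \<alpha> M1" and ?q = "cos_poly \<beta> M2"
  have "sqdist_L2 (\<lambda>x. f x + g x) (\<lambda>x. ?p x + ?q x)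
      \<le> 2 * sqdist_L2 (\<lambda>x. f x + g x) (\<lambda>x. ?p x + g x) + 2 * sqdist_L2 (\<lambda>x. ?p x + g x) (\<lambda>x. ?p x + ?q x)"
    using assms by (intro sqdist_L2_triangle L2_add L2_cos_poly)
  also have "\<dots> = 2 * sqdist_L2 f ?p + 2 * sqdist_L2 g ?q"
    by (simp add: algebra_simps)
  also have "\<dots> < e" using M1 M2 by simp
  finally show "\<exists>M \<gamma>. sqdist_L2 (\<lambda>x. f x + g x) (cos_poly \<gamma> M) < e"
    unfolding cos_poly_add by blast
qed

lemma cos_approximable_cmult:
  assumes "cos_approximable f"
  shows "cos_approximable (\<lambda>x. c * f x)"
  unfolding cos_approximable_def
proof (intro allI impI)
  fix e :: real assume "e > 0"
  then have "e / (c^2 + 1) > 0" by (simp add: add_nonneg_pos)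
  then obtain M \<alpha> where M: "sqdist_L2 f (cos_poly \<alpha> M) < e / (c^2 + 1)"
    using assms unfolding cos_approximable_def by blast
  let ?u = "\<lambda>x. f x - cos_poly \<alpha> M x"
  have "(\<lambda>x. c * f x - cos_poly (\<lambda>n. c * \<alpha> n) M x) = (\<lambda>x. c * ?u x)"
    by (simp add: cos_poly_cmult[symmetric] right_diff_distrib)
  moreover have "inner_L2 (\<lambda>x. c * ?u x) (\<lambda>x. c * ?u x) = c * (c * inner_L2 ?u ?u)"
    using inner_L2_cmult_left[of c ?u] inner_L2_commute[of ?u "\<lambda>x. c * ?u x"] by simp
  ultimately have "sqdist_L2 (\<lambda>x. c * f x) (cos_poly (\<lambda>n. c * \<alpha> n) M) = c * (c * inner_L2 ?u ?u)"
    by simp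
  then have "sqdist_L2 (\<lambda>x. c * f x) (cos_poly (\<lambda>n. c * \<alpha> n) M) = c^2 * sqdist_L2 f (cos_poly \<alpha> M)"
    by (simp add: power2_eq_square)
  also have "\<dots> \<le> c^2 * (e / (c^2 + 1))" using M by (intro mult_left_mono) auto
  also have "\<dots> < e"
  proof -
    have "0 < c^2 + 1" by (simp add: add_nonneg_pos)
    then show ?thesis using \<open>e > 0\<close> by (simp add: pos_divide_less_eq)
  qed
  finally show "\<exists>M \<gamma>. sqdist_L2 (\<lambda>x. c * f x) (cos_poly \<gamma> M) < e" by blast
qed

lemma cos_approximable_cos_poly: "cos_approximable (cos_poly \<alpha> M)"
  unfolding cos_approximable_def by (intro allI impI exI[of _ M] exI[of _ \<alpha>]) (simp add: inner_L2_def)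

lemma cos_approximable_sum:
  assumes "finite A" "\<And>i. i \<in> A \<Longrightarrow> L2 (f i) \<and> cos_approximable (f i)"
  shows "cos_approximable (\<lambda>x. \<Sum>i\<in>A. f i x)"
  using assms
proof (induction A rule: finite_induct)
  case empty
  show ?case using cos_approximable_cos_poly[of "\<lambda>n. 0" 0] by (simp add: cos_poly_def[abs_def])
qed (simp add: cos_approximable_add L2_sum)

definition cos_span :: "(real \<Rightarrow> real) \<Rightarrow> bool" where
  "cos_span h \<longleftrightarrow> (\<exists>M \<beta>. \<forall>t. h t = (\<Sum>k\<le>M. \<beta> k * cos (real k * t)))"

lemma cos_span_cos: "cos_span (\<lambda>t. cos (real k * t))"
  unfolding cos_span_def
  by (rule exI[of _ k], rule exI[of _ "\<lambda>j. if j = k then 1 else 0"])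
     (simp add: if_distrib[of "\<lambda>y. y * _"] sum.delta cong: if_cong)

lemma cos_span_const: "cos_span (\<lambda>t. c)"
  unfolding cos_span_def by (rule exI[of _ 0], rule exI[of _ "\<lambda>j. c"]) simp

lemma cos_span_cmult: "cos_span f \<Longrightarrow> cos_span (\<lambda>t. c * f t)"
  unfolding cos_span_def by (auto simp: sum_distrib_left mult.assoc intro!: exI[of _ "\<lambda>j. c * _ j"])

lemma cos_span_add:
  assumes "cos_span f" "cos_span g"
  shows "cos_span (\<lambda>t. f t + g t)"
proof -
  obtain K1 \<beta> K2 \<gamma> where f: "\<And>t. f t = (\<Sum>k\<le>K1. \<beta> k * cos (real k * t))"
    and g: "\<And>t. g t = (\<Sum>k\<le>K2. \<gamma> k * cos (real k * t))"
    using assms unfolding cos_span_def by blast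
  let ?\<delta> = "\<lambda>k. (if k \<le> K1 then \<beta> k else 0) + (if k \<le> K2 then \<gamma> k else 0)"
  have "f t + g t = (\<Sum>k\<le>max K1 K2. ?\<delta> k * cos (real k * t))" for t
    unfolding f g sum_atMost_pad[where K = K1 and K' = K2] sum_atMost_pad[where K = K2 and K' = K1]
    by (simp add: max.commute sum.distrib[symmetric] distrib_right if_distrib[of "\<lambda>y. y * _"] cong: if_cong)
  then show ?thesis unfolding cos_span_def by (intro exI[of _ "max K1 K2"] exI[of _ ?\<delta>]) blast
qed

lemma cos_span_sum:
  "finite A \<Longrightarrow> (\<And>i. i \<in> A \<Longrightarrow> cos_span (f i)) \<Longrightarrow> cos_span (\<lambda>t. \<Sum>i\<in>A. f i t)"
  by (induction A rule: finite_induct) (auto simp: cos_span_const cos_span_add)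

lemma cos_span_mult:
  assumes "cos_span f" "cos_span g"
  shows "cos_span (\<lambda>t. f t * g t)"
proof -
  obtain K1 \<beta> K2 \<gamma> where f: "\<And>t. f t = (\<Sum>k\<le>K1. \<beta> k * cos (real k * t))"
    and g: "\<And>t. g t = (\<Sum>k\<le>K2. \<gamma> k * cos (real k * t))"
    using assms unfolding cos_span_def by blast
  have cos_cos: "cos_span (\<lambda>t. cos (real j * t) * cos (real k * t))" for j k
  proof -
    have "cos (real j * t) * cos (real k * t) =
          1/2 * cos (real (if k \<le> j then j - k else k - j) * t) + 1/2 * cos (real (j + k) * t)" for t
      using cos_of_nat_diff[of j k t] by (simp add: cos_times_cos algebra_simps)
    then show ?thesis
      using cos_span_add[OF cos_span_cmult[OF cos_span_cos] cos_span_cmult[OF cos_span_cos]] by presburger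
  qed
  have "f t * g t = (\<Sum>j\<le>K1. \<Sum>k\<le>K2. (\<beta> j * \<gamma> k) * (cos (real j * t) * cos (real k * t)))" for t
    unfolding f g sum_product by (simp add: algebra_simps)
  then show ?thesis
    by (simp only: cos_span_sum cos_span_cmult cos_cos finite_atMost)
qed

lemma cos_span_polynomial: "real_polynomial_function q \<Longrightarrow> cos_span (\<lambda>t. q (cos t))"
proof (induction rule: real_polynomial_function.induct)
  case (linear f)
  then obtain c where "f = (\<lambda>x. x * c)" by (auto simp: real_bounded_linear)
  then show ?case using cos_span_cmult[OF cos_span_cos[of 1], of c] by (simp add: mult.commute)
qed (auto intro: cos_span_const cos_span_add cos_span_mult)

text \<open>Weierstrass approximation after the substitution \<open>y = cos (pi * x)\<close>, which turns
  polynomials in \<open>y\<close> into cosine polynomials.\<close>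

lemma cos_poly_uniform_approx:
  assumes g: "continuous_on {0..1} g" and e: "e > 0"
  obtains M \<alpha> where "\<And>x. x \<in> {0..1} \<Longrightarrow> \<bar>g x - cos_poly \<alpha> M x\<bar> < e"
proof -
  define h where "h y = g (arccos y / pi)" for y
  have "continuous_on {-1..1} h"
    unfolding h_def
  proof (rule continuous_on_compose2[OF g])
    show "continuous_on {-1..1} (\<lambda>y. arccos y / pi)"
      by (intro continuous_intros continuous_on_arccos') auto
    show "(\<lambda>y. arccos y / pi) ` {-1..1} \<subseteq> {0..1}"
      using arccos_bounded by (auto simp: field_simps)
  qed
  then obtain q where q: "real_polynomial_function q" "\<And>y. y \<in> {-1..1} \<Longrightarrow> \<bar>h y - q y\<bar> < e"
    using Stone_Weierstrass_real_polynomial_function[of "{-1..1::real}" h e] e by auto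
  obtain M \<beta> where \<beta>: "\<And>t. q (cos t) = (\<Sum>k\<le>M. \<beta> k * cos (real k * t))"
    using cos_span_polynomial[OF q(1)] unfolding cos_span_def by blast
  define \<alpha> where "\<alpha> k = (if k = 0 then \<beta> k else \<beta> k / sqrt 2)" for k
  have "cos_poly \<alpha> M x = q (cos (pi * x))" for x
    unfolding cos_poly_def \<beta> by (intro sum.cong refl) (auto simp: \<alpha>_def phi_def algebra_simps)
  moreover have "h (cos (pi * x)) = g x" if "x \<in> {0..1}" for x
    using that arccos_cos[of "pi * x"] by (simp add: h_def)
  ultimately have "\<bar>g x - cos_poly \<alpha> M x\<bar> < e" if "x \<in> {0..1}" for x
    using q(2)[of "cos (pi * x)"] that by simp
  then show ?thesis using that by blast
qed

lemma continuous_on_imp_cos_approximable: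
  assumes g: "continuous_on {0..1} g"
  shows "cos_approximable g"
  unfolding cos_approximable_def
proof (intro allI impI)
  fix \<epsilon> :: real assume \<epsilon>: "\<epsilon> > 0"
  then have "sqrt \<epsilon> / 2 > 0" by simp
  then obtain M \<alpha> where M: "\<And>x. x \<in> {0..1} \<Longrightarrow> \<bar>g x - cos_poly \<alpha> M x\<bar> < sqrt \<epsilon> / 2"
    using cos_poly_uniform_approx[OF g] by blast
  have "sqdist_L2 g (cos_poly \<alpha> M) \<le> (sqrt \<epsilon> / 2)^2"
    using M by (intro sqdist_L2_le_if_abs_le continuous_on_imp_L2 g L2_cos_poly less_imp_le)
  also have "\<dots> < \<epsilon>" using \<epsilon> by (simp add: power_divide)
  finally show "\<exists>M \<alpha>. sqdist_L2 g (cos_poly \<alpha> M) < \<epsilon>" by blast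
qed

lemma closed_indicator_cos_approximable:
  assumes F: "closed F"
  shows "cos_approximable (indicator F :: real \<Rightarrow> real)"
proof (cases "F = {}")
  case True
  then have "(indicator F :: real \<Rightarrow> real) = (\<lambda>x. 0)" by (auto simp: fun_eq_iff)
  then show ?thesis using continuous_on_imp_cos_approximable[of "\<lambda>x. 0"] by simp
next
  case False
  define g where "g k x = max 0 (1 - real k * infdist x F)" for k x
  have FL: "F \<in> sets lebesgue" using F by (simp add: borel_closed)
  have g01: "0 \<le> g k x \<and> g k x \<le> 1" for k x
    unfolding g_def using infdist_nonneg[of x F] by auto
  have gc: "continuous_on {0..1} (g k)" for k
    unfolding g_def by (intro continuous_intros)
  have g: "L2 (g k) \<and> cos_approximable (g k)" for k
    using gc by (auto intro: continuous_on_imp_L2 continuous_on_imp_cos_approximable)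
  let ?h = "\<lambda>k x. (indicator F x - g k x) * (indicator F x - g k x) :: real"
  have "(\<lambda>k. integral {0..1} (?h k)) \<longlonglongrightarrow> integral {0..1::real} (\<lambda>x. 0)"
  proof (rule dominated_convergence(2))
    show "?h k integrable_on {0..1}" for k
      using g by (intro L2_product_integrable L2_diff L2_indicator FL) auto
    show "(\<lambda>x. 1) integrable_on {0..1::real}" by (rule integrable_const_ivl)
    show "norm (?h k x) \<le> 1" for k x
      using g01[of k x] by (auto simp: indicator_def abs_mult intro: mult_le_one)
    show "(\<lambda>k. ?h k x) \<longlonglongrightarrow> 0" for x
    proof (cases "x \<in> F")
      case True
      then show ?thesis by (simp add: g_def)
    next
      case False
      then have d: "infdist x F > 0" using infdist_pos_not_in_closed[OF F] \<open>F \<noteq> {}\<close> by simp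
      obtain K :: nat where K: "real K > 1 / infdist x F" using reals_Archimedean2 by blast
      have "?h k x = 0" if "k \<ge> K" for k
      proof -
        have "1 < real K * infdist x F" using K d by (simp add: field_simps)
        also have "\<dots> \<le> real k * infdist x F" using that d by (intro mult_right_mono) auto
        finally show ?thesis using False by (simp add: g_def)
      qed
      then show ?thesis by (intro tendsto_eventually) (auto simp: eventually_sequentially)
    qed
  qed
  then show ?thesis
    by (intro cos_approximable_if_limit[OF L2_indicator[OF FL] g]) (simp add: inner_L2_def)
qed

lemma indicator_cos_approximable:
  assumes S: "S \<in> sets lebesgue"
  shows "cos_approximable (indicator S :: real \<Rightarrow> real)"
proof (rule cos_approximable_if_close[OF L2_indicator[OF S]])
  fix e :: real assume e: "e > 0"
  have "S \<inter> {0..1} \<in> sets lebesgue" using S by auto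
  then obtain F where F: "closed F" "F \<subseteq> S \<inter> {0..1}" "S \<inter> {0..1} - F \<in> lmeasurable"
    "emeasure lebesgue (S \<inter> {0..1} - F) < ennreal e"
    using sets_lebesgue_inner_closed[OF _ e] by blast
  have "(\<lambda>x. (indicator S x - indicator F x) * (indicator S x - indicator F x)) = (indicator (S - F) :: real \<Rightarrow> real)"
    using F(2) by (auto simp: indicator_def fun_eq_iff)
  moreover have "(S - F) \<inter> {0..1} = S \<inter> {0..1} - F" by auto
  ultimately have "sqdist_L2 (indicator S) (indicator F) = measure lebesgue (S \<inter> {0..1} - F)"
    using F(3) by (simp add: inner_L2_def integral_indicator)
  also have "\<dots> < e"
    using F(3,4) e by (simp add: emeasure_eq_measure2 ennreal_less_iff)
  finally show "\<exists>g. L2 g \<and> cos_approximable g \<and> sqdist_L2 (indicator S) g < e"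
    using L2_indicator[of F] closed_indicator_cos_approximable[OF F(1)] F(1) borel_closed
    by (intro exI[of _ "indicator F"]) simp
qed

text \<open>A bounded measurable function is within \<open>1 / k\<close> of the step function
  \<open>\<lfloor>k f\<rfloor> / k\<close>, a finite combination of indicators of measurable sets.\<close>

lemma bounded_measurable_cos_approximable:
  assumes f: "f \<in> borel_measurable (lebesgue_on {0..1})" and B: "\<And>x. x \<in> {0..1} \<Longrightarrow> \<bar>f x\<bar> \<le> B"
  shows "cos_approximable f"
proof (rule cos_approximable_if_close[OF L2_bounded_measurable[OF f B]])
  fix e :: real assume e: "e > 0"
  obtain k :: nat where k: "real k > 1 / sqrt e" using reals_Archimedean2 by blast
  moreover have "1 / sqrt e > 0" using e by simp
  ultimately have k0: "real k > 0" by linarith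
  define m where "m = \<lceil>real k * B\<rceil>"
  define S where "S j = {x \<in> {0..1}. \<lfloor>real k * f x\<rfloor> = j}" for j
  define s where "s x = (\<Sum>j\<in>{-m..m}. (of_int j / real k) * indicator (S j) x)" for x
  have S: "S j \<in> sets lebesgue" for j
  proof -
    have "{x \<in> space (lebesgue_on {0..1}). \<lfloor>real k * f x\<rfloor> = j} \<in> sets (lebesgue_on {0..1})"
      using f by measurable
    then show ?thesis by (simp add: S_def sets_restrict_space_iff)
  qed
  have "L2 (\<lambda>x. of_int j / real k * indicator (S j) x) \<and> cos_approximable (\<lambda>x. of_int j / real k * indicator (S j) x)" for j
    using L2_cmult[OF L2_indicator[OF S]] cos_approximable_cmult[OF indicator_cos_approximable[OF S]] by blast
  then have s: "L2 s \<and> cos_approximable s"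
    unfolding s_def[abs_def] by (intro conjI L2_sum cos_approximable_sum) blast+
  have "\<bar>f x - s x\<bar> \<le> 1 / real k" if x: "x \<in> {0..1}" for x
  proof -
    have "\<bar>real k * f x\<bar> \<le> real k * B" using B[OF x] k0 by (simp add: abs_mult mult_left_mono)
    also have "\<dots> \<le> of_int m" unfolding m_def by (rule le_of_int_ceiling)
    finally have "\<lfloor>real k * f x\<rfloor> \<in> {-m..m}"
      by (simp add: le_floor_iff floor_le_iff abs_le_iff)
    moreover have "s x = (\<Sum>j\<in>{-m..m}. if j = \<lfloor>real k * f x\<rfloor> then of_int j / real k else 0)"
      unfolding s_def using x by (intro sum.cong) (auto simp: S_def)
    ultimately have "s x = of_int \<lfloor>real k * f x\<rfloor> / real k"
      by simp
    then have "f x - s x = (real k * f x - of_int \<lfloor>real k * f x\<rfloor>) / real k"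
      using k0 by (simp add: field_simps)
    moreover have "0 \<le> real k * f x - of_int \<lfloor>real k * f x\<rfloor>" "real k * f x - of_int \<lfloor>real k * f x\<rfloor> \<le> 1"
      using of_int_floor_le[of "real k * f x"] real_of_int_floor_add_one_gt[of "real k * f x"] by linarith+
    ultimately show ?thesis using k0 by (simp add: divide_right_mono)
  qed
  then have "sqdist_L2 f s \<le> (1 / real k)^2"
    using s by (intro sqdist_L2_le_if_abs_le L2_bounded_measurable[OF f B]) auto
  also have "\<dots> < e"
  proof -
    have "1 / real k < sqrt e" using k k0 e by (simp add: field_simps)
    then have "(1 / real k)^2 < (sqrt e)^2" by (intro power_strict_mono) auto
    then show ?thesis using e by simp
  qed
  finally show "\<exists>g. L2 g \<and> cos_approximable g \<and> sqdist_L2 f g < e" using s by blast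
qed

lemma L2_imp_cos_approximable:
  assumes f: "L2 f"
  shows "cos_approximable f"
proof -
  define g where "g k x = max (- real k) (min (real k) (f x))" for k :: nat and x
  have gm: "g k \<in> borel_measurable (lebesgue_on {0..1})" for k
    unfolding g_def using L2_borel_measurable[OF f] by measurable
  have gb: "\<bar>g k x\<bar> \<le> real k" for k x unfolding g_def by auto
  have g: "L2 (g k) \<and> cos_approximable (g k)" for k
    using L2_bounded_measurable[OF gm gb] bounded_measurable_cos_approximable[OF gm gb] by blast
  let ?h = "\<lambda>k x. (f x - g k x) * (f x - g k x)"
  have "(\<lambda>k. integral {0..1} (?h k)) \<longlonglongrightarrow> integral {0..1::real} (\<lambda>x. 0)"
  proof (rule dominated_convergence(2))
    show "?h k integrable_on {0..1}" for k
      using f g by (intro L2_product_integrable L2_diff) auto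
    show "(\<lambda>x. (f x)^2) integrable_on {0..1}" using f by (rule L2_square_integrable)
    show "norm (?h k x) \<le> (f x)^2" for k x
    proof -
      have "\<bar>f x - g k x\<bar> \<le> \<bar>f x\<bar>" unfolding g_def by auto
      then show ?thesis using power_mono[of "\<bar>f x - g k x\<bar>" "\<bar>f x\<bar>" 2] by (simp add: power2_eq_square abs_mult)
    qed
    show "(\<lambda>k. ?h k x) \<longlonglongrightarrow> 0" for x
    proof -
      obtain K :: nat where K: "real K \<ge> \<bar>f x\<bar>" using real_arch_simple by blast
      have "?h k x = 0" if "k \<ge> K" for k
      proof -
        have "real k \<ge> \<bar>f x\<bar>" using K that by (meson of_nat_le_iff order_trans)
        then show ?thesis by (simp add: g_def)
      qed
      then show ?thesis by (intro tendsto_eventually) (auto simp: eventually_sequentially)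
    qed
  qed
  then show ?thesis by (intro cos_approximable_if_limit[OF f g]) (simp add: inner_L2_def)
qed

theorem Parseval:
  "L2 f \<Longrightarrow> (\<lambda>n. (neumann_coeff f n)^2) sums inner_L2 f f"
  by (rule Parseval_if_cos_approximable[OF _ L2_imp_cos_approximable])

lemma continuous_on_atLeast_if_atLeastAtMost:
  fixes f :: "real \<Rightarrow> real"
  assumes "\<And>T. T \<ge> 0 \<Longrightarrow> continuous_on {0..T} f"
  shows "continuous_on {0..} f"
  unfolding continuous_on_def
proof
  fix x :: real assume "x \<in> {0..}"
  then have "(f \<longlongrightarrow> f x) (at x within {0..x+1})"
    using assms[of "x + 1"] by (simp add: continuous_on_def)
  moreover have "at x within {0..} = at x within {0..x+1}"
    by (rule at_within_nhd[where S = "{..<x+1}"]) auto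
  ultimately show "(f \<longlongrightarrow> f x) (at x within {0..})" by simp
qed

lemma continuous_on_suminf_Weierstrass:
  fixes f :: "nat \<Rightarrow> real \<Rightarrow> real"
  assumes "\<And>n. continuous_on S (f n)" "\<And>n t. t \<in> S \<Longrightarrow> \<bar>f n t\<bar> \<le> M n" "summable M"
  shows "continuous_on S (\<lambda>t. \<Sum>n. f n t)"
proof (rule uniform_limit_theorem)
  show "uniform_limit S (\<lambda>n t. \<Sum>i<n. f i t) (\<lambda>t. \<Sum>n. f n t) sequentially"
    using assms(2,3) by (intro Weierstrass_m_test) auto
  show "\<forall>\<^sub>F n in sequentially. continuous_on S (\<lambda>t. \<Sum>i<n. f i t)"
    using assms(1) by (intro always_eventually allI continuous_on_sum) auto
qed simp

lemma summable_if_abs_le: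
  fixes f :: "nat \<Rightarrow> real"
  shows "(\<And>n. \<bar>f n\<bar> \<le> M n) \<Longrightarrow> summable M \<Longrightarrow> summable f"
  by (rule summable_comparison_test[of f M]) auto

lemma one_le_pi_squared: "1 \<le> pi^2"
  using pi_ge_two by (intro one_le_power) simp

lemma of_nat_le_eigenvalue: "real m \<le> (real m * pi)^2"
proof -
  have "real m \<le> (real m)^2 * 1" by (cases m) (auto simp: power2_eq_square)
  also have "\<dots> \<le> (real m)^2 * pi^2"
    using one_le_pi_squared by (intro mult_left_mono) auto
  finally show ?thesis by (simp add: power_mult_distrib)
qed

lemma summable_exp_eigenvalue:
  assumes "s > 0"
  shows "summable (\<lambda>m. exp ((c - (real m * pi)^2) * s))"
proof (rule summable_if_abs_le)
  show "\<bar>exp ((c - (real m * pi)^2) * s)\<bar> \<le> exp (c * s) * exp (- s) ^ m" for m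
  proof -
    have "exp ((c - (real m * pi)^2) * s) \<le> exp ((c - real m) * s)"
      using of_nat_le_eigenvalue[of m] assms by (simp add: mult_right_mono)
    also have "\<dots> = exp (c * s) * exp (- s) ^ m"
      by (simp add: exp_of_nat_mult[symmetric] exp_add[symmetric] algebra_simps)
    finally show ?thesis by simp
  qed
  show "summable (\<lambda>m. exp (c * s) * exp (- s) ^ m)"
    using assms by (intro summable_mult summable_geometric) simp
qed

lemma summable_inverse_eigenvalue_gap: "summable (\<lambda>m. 1 / \<bar>(real m * pi)^2 - c\<bar>)"
proof (rule summable_comparison_test_ev)
  show "summable (\<lambda>m. 2 * inverse (real m ^ 2))"
    by (intro summable_mult inverse_power_summable) auto
  obtain K :: nat where K: "real K \<ge> 2 * \<bar>c\<bar> + 1" using real_arch_simple by blast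
  have "norm (1 / \<bar>(real m * pi)^2 - c\<bar>) \<le> 2 * inverse (real m ^ 2)" if "m \<ge> K" for m
  proof -
    have m: "real m \<ge> 2 * \<bar>c\<bar> + 1" using K that by (meson of_nat_le_iff order_trans)
    then have "real m * 1 \<le> real m * real m" by (intro mult_left_mono) auto
    then have "(real m)^2 \<ge> real m" by (simp add: power2_eq_square)
    moreover have "(real m)^2 \<le> (real m * pi)^2"
      using mult_left_mono[OF one_le_pi_squared, of "(real m)^2"] by (simp add: power_mult_distrib)
    ultimately have pos: "(real m * pi)^2 - c \<ge> (real m)^2 / 2" using m by linarith
    have "(real m)^2 > 0" using m by simp
    moreover from this have "(real m * pi)^2 - c > 0" using pos by linarith
    ultimately have "\<bar>(real m * pi)^2 - c\<bar> = (real m * pi)^2 - c" "0 < ((real m * pi)^2 - c) * ((real m)^2 / 2)"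
      by simp_all
    then have "1 / \<bar>(real m * pi)^2 - c\<bar> \<le> 1 / ((real m)^2 / 2)"
      using pos by (simp only: divide_left_mono zero_le_one)
    then show ?thesis by (simp add: field_simps)
  qed
  then show "eventually (\<lambda>m. norm (1 / \<bar>(real m * pi)^2 - c\<bar>) \<le> 2 * inverse (real m ^ 2)) sequentially"
    by (auto simp: eventually_sequentially)
qed

definition cos_series :: "(nat \<Rightarrow> real) \<Rightarrow> real \<Rightarrow> real" where
  "cos_series d x = (\<Sum>n. d n * phi n x)"

lemma abs_cos_series_term_le: "\<bar>d n * phi n x\<bar> \<le> sqrt 2 * \<bar>d n\<bar>"
  using abs_phi_le[of n x] by (simp add: abs_mult mult.commute mult_left_mono)

lemma summable_cos_series: "summable (\<lambda>n. \<bar>d n\<bar>) \<Longrightarrow> summable (\<lambda>n. d n * phi n x)"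
  by (rule summable_if_abs_le[OF abs_cos_series_term_le summable_mult])

lemma continuous_on_cos_series: "summable (\<lambda>n. \<bar>d n\<bar>) \<Longrightarrow> continuous_on A (cos_series d)"
  unfolding cos_series_def[abs_def]
  by (rule continuous_on_suminf_Weierstrass[OF _ abs_cos_series_term_le])
     (auto intro!: continuous_intros continuous_on_phi summable_mult)

lemma neumann_coeff_cos_series:
  assumes d: "summable (\<lambda>n. \<bar>d n\<bar>)"
  shows "neumann_coeff (cos_series d) m = d m"
proof -
  let ?f = "\<lambda>J x. (\<Sum>n<J. d n * phi n x) * phi m x"
  have lim: "(\<lambda>J. integral {0..1} (?f J)) \<longlonglongrightarrow> integral {0..1} (\<lambda>x. cos_series d x * phi m x)"
  proof (rule dominated_convergence(2))
    show "?f J integrable_on {0..1}" for J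
      by (intro integrable_continuous_interval continuous_intros continuous_on_phi)
    show "(\<lambda>x. sqrt 2 * (\<Sum>n. \<bar>d n\<bar>) * sqrt 2) integrable_on {0..1::real}"
      by (rule integrable_const_ivl)
    fix J :: nat and x :: real
    have "\<bar>\<Sum>n<J. d n * phi n x\<bar> \<le> (\<Sum>n<J. sqrt 2 * \<bar>d n\<bar>)"
      by (rule order_trans[OF sum_abs sum_mono]) (rule abs_cos_series_term_le)
    also have "\<dots> \<le> sqrt 2 * (\<Sum>n. \<bar>d n\<bar>)"
      unfolding sum_distrib_left[symmetric] using d by (intro mult_left_mono sum_le_suminf) auto
    finally show "norm (?f J x) \<le> sqrt 2 * (\<Sum>n. \<bar>d n\<bar>) * sqrt 2"
      using abs_phi_le[of m x] by (simp add: abs_mult) (intro mult_mono, auto)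
    show "(\<lambda>J. ?f J x) \<longlonglongrightarrow> cos_series d x * phi m x"
      unfolding cos_series_def using summable_sums[OF summable_cos_series[OF d, of x]]
      by (intro tendsto_mult_right) (simp add: sums_def)
  qed
  have "integral {0..1} (?f J) = inner_L2 (\<lambda>x. \<Sum>n<J. d n * phi n x) (phi m)" for J
    by (simp add: inner_L2_def)
  also have "\<dots> J = (\<Sum>n<J. d n * inner_L2 (phi n) (phi m))" for J
    by (subst inner_L2_sum_left) (auto intro: L2_cmult L2_phi simp: inner_L2_cmult_left)
  also have "\<dots> J = (if m < J then d m else 0)" for J
    by (simp add: inner_L2_phi_phi if_distrib[of "\<lambda>y. _ * y"] sum.delta' cong: if_cong)
  finally have "(\<lambda>J. integral {0..1} (?f J)) \<longlonglongrightarrow> d m"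
    by (simp add: eventually_sequentially tendsto_eventually exI[of _ "Suc m"])
  then show ?thesis
    unfolding neumann_coeff_def inner_L2_def using lim by (rule LIMSEQ_unique[rotated])
qed

definition exp_sum :: "(nat \<Rightarrow> real) \<Rightarrow> (nat \<Rightarrow> real) \<Rightarrow> real \<Rightarrow> real" where
  "exp_sum d \<nu> t = (\<Sum>m. d m * exp (\<nu> m * t))"

definition exp_sum_integral :: "(nat \<Rightarrow> real) \<Rightarrow> (nat \<Rightarrow> real) \<Rightarrow> real \<Rightarrow> real" where
  "exp_sum_integral d \<nu> t = (\<Sum>m. d m * (exp (\<nu> m * t) - 1) / \<nu> m)"

text \<open>\<open>exp_sum_integral d \<nu>\<close> is the primitive of \<open>exp_sum d \<nu>\<close> vanishing at \<open>0\<close>; it stays bounded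
  although \<open>exp_sum d \<nu> t\<close> may blow up as \<open>t \<rightarrow> 0\<close>.\<close>

locale decaying_exp_sum =
  fixes d \<nu> :: "nat \<Rightarrow> real"
  assumes decaying: "\<And>m. d m = 0 \<or> \<nu> m < 0"
    and summable_ratio: "summable (\<lambda>m. \<bar>d m\<bar> / \<bar>\<nu> m\<bar>)"
    and summable_exp: "\<And>s. s > 0 \<Longrightarrow> summable (\<lambda>m. \<bar>d m\<bar> * exp (\<nu> m * s))"
begin

lemma abs_integral_term_le: "t \<ge> 0 \<Longrightarrow> \<bar>d m * (exp (\<nu> m * t) - 1) / \<nu> m\<bar> \<le> \<bar>d m\<bar> / \<bar>\<nu> m\<bar>"
proof (cases "d m = 0")
  case False
  assume "t \<ge> 0"
  then have "exp (\<nu> m * t) \<le> 1" using decaying[of m] False by (simp add: mult_nonpos_nonneg)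
  then have "\<bar>exp (\<nu> m * t) - 1\<bar> \<le> 1" using exp_gt_zero[of "\<nu> m * t"] by linarith
  then show ?thesis by (simp add: abs_mult abs_divide divide_right_mono mult_left_le)
qed simp

lemma abs_term_le: "s \<le> t \<Longrightarrow> \<bar>d m * exp (\<nu> m * t)\<bar> \<le> \<bar>d m\<bar> * exp (\<nu> m * s)"
  using decaying[of m] by (auto simp: abs_mult mult_left_mono mult_left_mono_neg)

lemma summable_integral: "t \<ge> 0 \<Longrightarrow> summable (\<lambda>m. d m * (exp (\<nu> m * t) - 1) / \<nu> m)"
  by (rule summable_if_abs_le[OF abs_integral_term_le summable_ratio])

lemma continuous_on_integral: "continuous_on {0..} (exp_sum_integral d \<nu>)"
  unfolding exp_sum_integral_def[abs_def]
proof (rule continuous_on_suminf_Weierstrass[OF _ abs_integral_term_le summable_ratio])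
  show "continuous_on {0..} (\<lambda>t. d m * (exp (\<nu> m * t) - 1) / \<nu> m)" for m
    by (cases "\<nu> m = 0") (auto intro!: continuous_intros)
qed auto

lemma integral_at_0: "exp_sum_integral d \<nu> 0 = 0"
  by (simp add: exp_sum_integral_def)

lemma integral_le:
  assumes "t \<ge> 0"
  shows "exp_sum_integral d \<nu> t \<le> (\<Sum>m. \<bar>d m\<bar> / \<bar>\<nu> m\<bar>)"
proof -
  have "summable (\<lambda>m. \<bar>d m * (exp (\<nu> m * t) - 1) / \<nu> m\<bar>)"
    using abs_integral_term_le[OF assms] by (intro summable_if_abs_le[OF _ summable_ratio]) simp
  then have "exp_sum_integral d \<nu> t \<le> (\<Sum>m. \<bar>d m * (exp (\<nu> m * t) - 1) / \<nu> m\<bar>)"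
    unfolding exp_sum_integral_def by (rule order_trans[OF abs_ge_self summable_rabs])
  also have "\<dots> \<le> (\<Sum>m. \<bar>d m\<bar> / \<bar>\<nu> m\<bar>)"
    using abs_integral_term_le[OF assms] summable_ratio \<open>summable _\<close> by (intro suminf_le) auto
  finally show ?thesis .
qed

lemma integral_has_derivative:
  assumes "t > 0"
  shows "(exp_sum_integral d \<nu> has_real_derivative exp_sum d \<nu> t) (at t)"
  unfolding exp_sum_integral_def[abs_def] exp_sum_def
proof (rule has_field_derivative_series'(2)[where S = "{t/2..t+1}"])
  show "((\<lambda>x. d m * (exp (\<nu> m * x) - 1) / \<nu> m) has_field_derivative d m * exp (\<nu> m * x))
      (at x within {t/2..t+1})" for m x
    using decaying[of m] by (cases "d m = 0") (auto intro!: derivative_eq_intros)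
  show "uniformly_convergent_on {t/2..t+1} (\<lambda>n x. \<Sum>i<n. d i * exp (\<nu> i * x))"
    using assms abs_term_le[of "t/2"] summable_exp[of "t/2"]
    by (intro Weierstrass_m_test'[where M = "\<lambda>m. \<bar>d m\<bar> * exp (\<nu> m * (t/2))"]) auto
qed (use assms summable_integral in auto)

end

section \<open>A scalar Volterra equation\<close>

lemma continuous_on_interval_abs_bound:
  fixes f :: "real \<Rightarrow> real"
  assumes "continuous_on {a..b} f"
  obtains G where "G \<ge> 0" "\<And>t. t \<in> {a..b} \<Longrightarrow> \<bar>f t\<bar> \<le> G"
proof -
  have "bounded (f ` {a..b})" by (intro compact_imp_bounded compact_continuous_image assms) auto
  then obtain G where "\<forall>y\<in>f ` {a..b}. norm y \<le> G" by (auto simp: bounded_iff)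
  then have "\<bar>f t\<bar> \<le> max G 0" if "t \<in> {a..b}" for t using that by force
  then show ?thesis by (rule that[of "max G 0", rotated]) auto
qed

lemma continuous_on_indefinite_integral_atLeast:
  fixes h :: "real \<Rightarrow> real"
  assumes "continuous_on {0..} h"
  shows "continuous_on {0..} (\<lambda>t. integral {0..t} h)"
proof (rule continuous_on_atLeast_if_atLeastAtMost)
  fix T :: real
  show "continuous_on {0..T} (\<lambda>t. integral {0..t} h)"
    by (intro indefinite_integral_continuous_1 integrable_continuous_interval continuous_on_subset[OF assms]) auto
qed

lemma indefinite_integral_has_real_derivative:
  fixes h :: "real \<Rightarrow> real"
  assumes h: "continuous_on {0..} h" and t: "t > 0"
  shows "((\<lambda>t. integral {0..t} h) has_real_derivative h t) (at t)"
proof -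
  have "((\<lambda>t. integral {0..t} h) has_real_derivative h t) (at t within {0..t+1})"
    by (rule integral_has_real_derivative) (use t in \<open>auto intro: continuous_on_subset[OF h]\<close>)
  moreover have "at t within {0..t+1} = at t"
    by (rule at_within_interior) (use t in simp)
  ultimately show ?thesis by simp
qed

lemma exp_le_exp_abs_mult:
  fixes c s T :: real
  assumes "s \<in> {0..T}"
  shows "exp (c * s) \<le> exp (\<bar>c\<bar> * T)"
proof -
  have "c * s \<le> \<bar>c\<bar> * s" using assms mult_right_mono[OF abs_ge_self, of s c] by simp
  also have "\<dots> \<le> \<bar>c\<bar> * T" using assms by (intro mult_left_mono) auto
  finally show ?thesis by simp
qed

definition volterra_op :: "nat \<Rightarrow> (nat \<Rightarrow> real) \<Rightarrow> (nat \<Rightarrow> real) \<Rightarrow> (real \<Rightarrow> real) \<Rightarrow> real \<Rightarrow> real" where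
  "volterra_op N k \<mu> u t = (\<Sum>n\<le>N. k n * exp (\<mu> n * t) * integral {0..t} (\<lambda>s. exp (- \<mu> n * s) * u s))"

primrec picard_iter :: "nat \<Rightarrow> (nat \<Rightarrow> real) \<Rightarrow> (nat \<Rightarrow> real) \<Rightarrow> (real \<Rightarrow> real) \<Rightarrow> nat \<Rightarrow> real \<Rightarrow> real" where
  "picard_iter N k \<mu> g 0 = g"
| "picard_iter N k \<mu> g (Suc j) = volterra_op N k \<mu> (picard_iter N k \<mu> g j)"

lemma continuous_on_volterra_op:
  "continuous_on {0..} u \<Longrightarrow> continuous_on {0..} (volterra_op N k \<mu> u)"
  unfolding volterra_op_def[abs_def]
  by (intro continuous_intros continuous_on_indefinite_integral_atLeast continuous_on_mult)

lemma continuous_on_picard_iter: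
  "continuous_on {0..} g \<Longrightarrow> continuous_on {0..} (picard_iter N k \<mu> g j)"
  by (induction j) (auto intro: continuous_on_volterra_op)

lemma integral_power_atLeastAtMost:
  assumes "t \<ge> 0"
  shows "integral {0..t} (\<lambda>s. s ^ j) = t ^ Suc j / real (Suc j)"
proof -
  have "((\<lambda>s. s ^ j) has_integral (t ^ Suc j / real (Suc j) - 0 ^ Suc j / real (Suc j))) {0..t}"
  proof (rule fundamental_theorem_of_calculus)
    fix x :: real
    have "((\<lambda>s. s ^ Suc j / real (Suc j)) has_real_derivative (real (Suc j) * x ^ j / real (Suc j))) (at x within {0..t})"
      by (intro derivative_eq_intros DERIV_pow) auto
    then show "((\<lambda>s. s ^ Suc j / real (Suc j)) has_vector_derivative x ^ j) (at x within {0..t})"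
      unfolding has_real_derivative_iff_has_vector_derivative[symmetric] by simp
  qed (use assms in auto)
  then show ?thesis by (simp add: integral_unique)
qed

text \<open>On \<open>[0, T]\<close> the kernel \<open>k\<^sub>n e\<^bsup>\<mu>\<^sub>n (t - s)\<^esup>\<close> is bounded by \<open>\<bar>k\<^sub>n\<bar> e\<^bsup>2 \<bar>\<mu>\<^sub>n\<bar> T\<^esup>\<close>,
  so one application of the operator raises a power bound \<open>C s\<^sup>j\<close> by one degree.\<close>

lemma abs_volterra_op_le:
  assumes u: "continuous_on {0..} u" and t: "0 \<le> t" "t \<le> T" and C: "C \<ge> 0"
    and bound: "\<And>s. s \<in> {0..t} \<Longrightarrow> \<bar>u s\<bar> \<le> C * s ^ j"
  shows "\<bar>volterra_op N k \<mu> u t\<bar> \<le> (\<Sum>n\<le>N. \<bar>k n\<bar> * exp (2 * \<bar>\<mu> n\<bar> * T)) * (C * t ^ Suc j / real (Suc j))"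
proof -
  have term_le: "\<bar>k n * exp (\<mu> n * t) * integral {0..t} (\<lambda>s. exp (- \<mu> n * s) * u s)\<bar>
     \<le> \<bar>k n\<bar> * exp (2 * \<bar>\<mu> n\<bar> * T) * (C * t ^ Suc j / real (Suc j))" for n
  proof -
    have "norm (integral {0..t} (\<lambda>s. exp (- \<mu> n * s) * u s)) \<le> integral {0..t} (\<lambda>s. exp (\<bar>\<mu> n\<bar> * T) * C * s ^ j)"
    proof (rule integral_norm_bound_integral)
      show "(\<lambda>s. exp (- \<mu> n * s) * u s) integrable_on {0..t}"
        by (intro integrable_continuous_interval continuous_intros continuous_on_subset[OF u]) auto
      show "(\<lambda>s. exp (\<bar>\<mu> n\<bar> * T) * C * s ^ j) integrable_on {0..t}"
        by (intro integrable_continuous_interval continuous_intros)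
      show "norm (exp (- \<mu> n * s) * u s) \<le> exp (\<bar>\<mu> n\<bar> * T) * C * s ^ j" if s: "s \<in> {0..t}" for s
        using exp_le_exp_abs_mult[of s T "- \<mu> n"] bound[OF s] s t C
        by (simp add: abs_mult mult.assoc) (intro mult_mono, auto)
    qed
    then have "\<bar>integral {0..t} (\<lambda>s. exp (- \<mu> n * s) * u s)\<bar> \<le> integral {0..t} (\<lambda>s. exp (\<bar>\<mu> n\<bar> * T) * C * s ^ j)"
      by simp
    also have "\<dots> = exp (\<bar>\<mu> n\<bar> * T) * (C * t ^ Suc j / real (Suc j))"
      using integral_power_atLeastAtMost[OF t(1), of j] by (simp add: mult.assoc)
    finally have "\<bar>integral {0..t} (\<lambda>s. exp (- \<mu> n * s) * u s)\<bar> \<le> exp (\<bar>\<mu> n\<bar> * T) * (C * t ^ Suc j / real (Suc j))" .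
    then have "\<bar>k n\<bar> * exp (\<mu> n * t) * \<bar>integral {0..t} (\<lambda>s. exp (- \<mu> n * s) * u s)\<bar>
        \<le> \<bar>k n\<bar> * exp (\<bar>\<mu> n\<bar> * T) * (exp (\<bar>\<mu> n\<bar> * T) * (C * t ^ Suc j / real (Suc j)))"
      using exp_le_exp_abs_mult[of t T "\<mu> n"] t by (intro mult_mono mult_left_mono) auto
    moreover have "exp (2 * \<bar>\<mu> n\<bar> * T) = exp (\<bar>\<mu> n\<bar> * T) * exp (\<bar>\<mu> n\<bar> * T)"
      by (simp add: exp_add[symmetric])
    ultimately show ?thesis by (simp add: abs_mult mult.assoc)
  qed
  have "\<bar>volterra_op N k \<mu> u t\<bar> \<le> (\<Sum>n\<le>N. \<bar>k n\<bar> * exp (2 * \<bar>\<mu> n\<bar> * T) * (C * t ^ Suc j / real (Suc j)))"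
    unfolding volterra_op_def by (rule order_trans[OF sum_abs sum_mono[OF term_le]])
  then show ?thesis by (simp only: sum_distrib_right)
qed

lemma abs_picard_iter_le:
  assumes g: "continuous_on {0..} g" and t: "t \<in> {0..T}"
    and G: "G \<ge> 0" "\<And>t. t \<in> {0..T} \<Longrightarrow> \<bar>g t\<bar> \<le> G"
  shows "\<bar>picard_iter N k \<mu> g j t\<bar> \<le> G * ((\<Sum>n\<le>N. \<bar>k n\<bar> * exp (2 * \<bar>\<mu> n\<bar> * T)) * t) ^ j / fact j"
  using t
proof (induction j arbitrary: t)
  case (Suc j)
  let ?\<kappa> = "\<Sum>n\<le>N. \<bar>k n\<bar> * exp (2 * \<bar>\<mu> n\<bar> * T)"
  have "?\<kappa> \<ge> 0" by (intro sum_nonneg) auto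
  have "\<bar>picard_iter N k \<mu> g (Suc j) t\<bar> \<le> ?\<kappa> * (G * ?\<kappa> ^ j / fact j * t ^ Suc j / real (Suc j))"
    unfolding picard_iter.simps
  proof (rule abs_volterra_op_le[OF continuous_on_picard_iter[OF g]])
    show "\<bar>picard_iter N k \<mu> g j s\<bar> \<le> G * ?\<kappa> ^ j / fact j * s ^ j" if "s \<in> {0..t}" for s
      using Suc.IH[of s] that Suc.prems by (simp add: power_mult_distrib)
  qed (use Suc.prems G \<open>?\<kappa> \<ge> 0\<close> in auto)
  then show ?case by (simp add: power_mult_distrib field_simps)
qed (use G in auto)

lemma picard_iter_dominated:
  assumes g: "continuous_on {0..} g"
  obtains M where "summable M" "\<And>j t. t \<in> {0..T} \<Longrightarrow> \<bar>picard_iter N k \<mu> g j t\<bar> \<le> M j"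
proof -
  obtain G where G: "G \<ge> 0" "\<And>t. t \<in> {0..T} \<Longrightarrow> \<bar>g t\<bar> \<le> G"
    using continuous_on_interval_abs_bound[OF continuous_on_subset[OF g, of "{0..T}"]] by auto
  define \<kappa> where "\<kappa> = (\<Sum>n\<le>N. \<bar>k n\<bar> * exp (2 * \<bar>\<mu> n\<bar> * T))"
  have "\<kappa> \<ge> 0" unfolding \<kappa>_def by (intro sum_nonneg) auto
  have "\<bar>picard_iter N k \<mu> g j t\<bar> \<le> G * (inverse (fact j) * (\<kappa> * T) ^ j)" if t: "t \<in> {0..T}" for j t
  proof -
    have "\<bar>picard_iter N k \<mu> g j t\<bar> \<le> G * (\<kappa> * t) ^ j / fact j"
      unfolding \<kappa>_def by (rule abs_picard_iter_le[OF g t G])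
    also have "\<dots> \<le> G * (\<kappa> * T) ^ j / fact j"
      using t \<open>\<kappa> \<ge> 0\<close> G(1) by (intro divide_right_mono mult_left_mono power_mono) auto
    finally show ?thesis by (simp add: field_simps)
  qed
  moreover have "summable (\<lambda>j. G * (inverse (fact j) * (\<kappa> * T) ^ j))"
    by (intro summable_mult summable_exp)
  ultimately show ?thesis using that by blast
qed

lemma integral_mult_suminf_sums:
  fixes h :: "real \<Rightarrow> real" and v :: "nat \<Rightarrow> real \<Rightarrow> real"
  assumes h: "continuous_on {0..t} h" and v: "\<And>j. continuous_on {0..t} (v j)"
    and M: "summable M" "\<And>j s. s \<in> {0..t} \<Longrightarrow> \<bar>v j s\<bar> \<le> M j"
  shows "(\<lambda>j. integral {0..t} (\<lambda>s. h s * v j s)) sums integral {0..t} (\<lambda>s. h s * (\<Sum>j. v j s))"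
proof -
  obtain H where H: "\<And>s. s \<in> {0..t} \<Longrightarrow> \<bar>h s\<bar> \<le> H"
    using continuous_on_interval_abs_bound[OF h] by metis
  let ?f = "\<lambda>J s. h s * (\<Sum>j<J. v j s)"
  have "(\<lambda>J. integral {0..t} (?f J)) \<longlonglongrightarrow> integral {0..t} (\<lambda>s. h s * (\<Sum>j. v j s))"
  proof (rule dominated_convergence(2))
    show "?f J integrable_on {0..t}" for J
      by (intro integrable_continuous_interval continuous_intros h v)
    show "(\<lambda>s. H * suminf M) integrable_on {0..t}" by (rule integrable_const_ivl)
    fix J :: nat and s :: real assume s: "s \<in> {0..t}"
    have "\<bar>\<Sum>j<J. v j s\<bar> \<le> suminf M"
      using M s by (intro order_trans[OF sum_abs] order_trans[OF sum_mono sum_le_suminf])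
         (auto intro: order_trans[OF abs_ge_zero])
    then show "norm (?f J s) \<le> H * suminf M"
      using H[OF s] by (simp add: abs_mult) (intro mult_mono, auto)
    show "(\<lambda>J. ?f J s) \<longlonglongrightarrow> h s * (\<Sum>j. v j s)"
      using summable_if_abs_le[OF M(2)[OF s] M(1)]
      by (intro tendsto_mult_left) (simp add: summable_LIMSEQ)
  qed
  moreover have "integral {0..t} (?f J) = (\<Sum>j<J. integral {0..t} (\<lambda>s. h s * v j s))" for J
    unfolding sum_distrib_left by (intro integral_sum integrable_continuous_interval continuous_intros h v) auto
  ultimately show ?thesis unfolding sums_def by simp
qed

text \<open>The Picard series converges like the exponential series, uniformly on bounded intervals.\<close>

lemma volterra_solution_exists:
  assumes g: "continuous_on {0..} g"
  obtains z where "continuous_on {0..} z" "\<And>t. t \<ge> 0 \<Longrightarrow> z t = g t + volterra_op N k \<mu> z t"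
proof -
  define v where "v = picard_iter N k \<mu> g"
  define z where "z t = (\<Sum>j. v j t)" for t
  have vc: "continuous_on S (v j)" if "S \<subseteq> {0..}" for j S
    unfolding v_def using continuous_on_picard_iter[OF g] that by (rule continuous_on_subset)
  have zc: "continuous_on {0..} z"
  proof (rule continuous_on_atLeast_if_atLeastAtMost)
    fix T :: real
    obtain M where "summable M" "\<And>j t. t \<in> {0..T} \<Longrightarrow> \<bar>v j t\<bar> \<le> M j"
      unfolding v_def using picard_iter_dominated[OF g] by metis
    then show "continuous_on {0..T} z"
      unfolding z_def[abs_def] by (intro continuous_on_suminf_Weierstrass vc) auto
  qed
  have "z t = g t + volterra_op N k \<mu> z t" if t: "t \<ge> 0" for t
  proof -
    obtain M where M: "summable M" "\<And>j s. s \<in> {0..t} \<Longrightarrow> \<bar>v j s\<bar> \<le> M j"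
      unfolding v_def using picard_iter_dominated[OF g] by metis
    have "(\<lambda>j. integral {0..t} (\<lambda>s. exp (- \<mu> n * s) * v j s)) sums integral {0..t} (\<lambda>s. exp (- \<mu> n * s) * z s)" for n
      unfolding z_def by (rule integral_mult_suminf_sums[OF _ _ M]) (auto intro!: continuous_intros vc)
    then have "(\<lambda>j. volterra_op N k \<mu> (v j) t) sums volterra_op N k \<mu> z t"
      unfolding volterra_op_def by (intro sums_sum sums_mult)
    then have "(\<lambda>j. v j t) sums (volterra_op N k \<mu> z t + v 0 t)"
      using sums_Suc_iff[of "\<lambda>j. v j t"] by (simp add: v_def)
    moreover have "summable (\<lambda>j. v j t)"
      using M(2)[of t] t by (intro summable_if_abs_le[OF _ M(1)]) auto
    then have "(\<lambda>j. v j t) sums z t" unfolding z_def by (rule summable_sums)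
    ultimately show ?thesis using sums_unique2 by (fastforce simp: v_def)
  qed
  then show ?thesis using that zc by blast
qed

section \<open>Quadratic forms and Lyapunov estimates\<close>

definition sqnorm :: "nat \<Rightarrow> (nat \<Rightarrow> real) \<Rightarrow> real" where
  "sqnorm N x = (\<Sum>i\<le>N. (x i)^2)"

lemma sqnorm_nonneg: "sqnorm N x \<ge> 0"
  unfolding sqnorm_def by (intro sum_nonneg) auto

lemma square_le_sqnorm: "i \<le> N \<Longrightarrow> (x i)^2 \<le> sqnorm N x"
  unfolding sqnorm_def by (intro member_le_sum) auto

lemma quad_cong: "(\<And>i. i \<le> N \<Longrightarrow> x i = y i) \<Longrightarrow> quad N M x = quad N M y"
  unfolding quad_def by (intro sum.cong refl) auto

lemma quad_scale: "quad N M (\<lambda>i. c * x i) = c^2 * quad N M x"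
  unfolding quad_def by (simp add: sum_distrib_left power2_eq_square algebra_simps)

lemma quad_le_sqnorm: "quad N M x \<le> (\<Sum>i\<le>N. \<Sum>j\<le>N. \<bar>M i j\<bar>) * sqnorm N x"
proof -
  have "x i * M i j * x j \<le> \<bar>M i j\<bar> * sqnorm N x" if "i \<le> N" "j \<le> N" for i j
  proof -
    have "\<bar>x i * x j\<bar> \<le> ((x i)^2 + (x j)^2) / 2"
      using sum_squares_bound[of "\<bar>x i\<bar>" "\<bar>x j\<bar>"] by (simp add: abs_mult)
    also have "\<dots> \<le> sqnorm N x"
      using square_le_sqnorm[of i N x] square_le_sqnorm[of j N x] that by simp
    finally have "\<bar>x i * x j\<bar> \<le> sqnorm N x" .
    then have "\<bar>M i j\<bar> * \<bar>x i * x j\<bar> \<le> \<bar>M i j\<bar> * sqnorm N x" by (intro mult_left_mono) auto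
    moreover have "x i * M i j * x j \<le> \<bar>M i j\<bar> * \<bar>x i * x j\<bar>"
      using abs_ge_self[of "x i * M i j * x j"] by (simp add: abs_mult mult.commute mult.left_commute)
    ultimately show ?thesis by linarith
  qed
  then have "quad N M x \<le> (\<Sum>i\<le>N. \<Sum>j\<le>N. \<bar>M i j\<bar> * sqnorm N x)"
    unfolding quad_def by (intro sum_mono) auto
  then show ?thesis by (simp add: sum_distrib_right)
qed

lemma compact_truncated_unit_sphere:
  "compact (PiE UNIV (\<lambda>i. if i \<le> N then {-1..1} else {0::real}) \<inter> sqnorm N -` {1})"
proof (rule compact_Int_closed)
  have "compactin (product_topology (\<lambda>i. euclidean) UNIV) (PiE UNIV (\<lambda>i. if i \<le> N then {-1..1} else {0::real}))"
    unfolding compactin_PiE by auto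
  then show "compact (PiE UNIV (\<lambda>i. if i \<le> N then {-1..1} else {0::real}))"
    by (simp add: euclidean_product_topology)
  have "continuous_on UNIV (sqnorm N)"
    unfolding sqnorm_def[abs_def] by (intro continuous_intros continuous_on_product_coordinates)
  then show "closed (sqnorm N -` {1})"
    by (intro continuous_closed_vimage) (auto intro: continuous_on_imp_continuous_within)
qed

lemma quad_ge_if_ge_on_unit_sphere:
  assumes "\<And>y. (\<And>i. i > N \<Longrightarrow> y i = 0) \<Longrightarrow> sqnorm N y = 1 \<Longrightarrow> m \<le> quad N S y"
  shows "m * sqnorm N x \<le> quad N S x"
proof (cases "sqnorm N x = 0")
  case True
  then have "x i = 0" if "i \<le> N" for i using square_le_sqnorm[OF that, of x] by simp
  then have "quad N S x = 0" by (simp add: quad_def)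
  then show ?thesis using True by simp
next
  case False
  define r where "r = sqrt (sqnorm N x)"
  have r: "r > 0" "r^2 = sqnorm N x" using False sqnorm_nonneg[of N x] by (auto simp: r_def)
  define y where "y i = (if i \<le> N then x i / r else 0)" for i
  have "sqnorm N y = sqnorm N x / r^2"
    unfolding sqnorm_def y_def by (simp add: power_divide sum_divide_distrib)
  then have "m \<le> quad N S y" using r False by (intro assms) (auto simp: y_def)
  then have "r^2 * m \<le> r^2 * quad N S y" by (intro mult_left_mono) auto
  also have "r^2 * quad N S y = quad N S (\<lambda>i. r * y i)" by (rule quad_scale[symmetric])
  also have "\<dots> = quad N S x" using r by (intro quad_cong) (simp add: y_def)
  finally show ?thesis using r by (simp add: mult.commute)
qed

text \<open>The constant is the minimum of the form on the compact unit sphere of the first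
  \<open>N + 1\<close> coordinates.\<close>

lemma pos_def_coercive:
  assumes S: "pos_def N S"
  obtains \<eta> where "\<eta> > 0" "\<And>x. \<eta> * sqnorm N x \<le> quad N S x"
proof -
  define K where "K = PiE UNIV (\<lambda>i. if i \<le> N then {-1..1} else {0::real}) \<inter> sqnorm N -` {1}"
  have "sqnorm N (\<lambda>i. if i = 0 then 1 else 0) = 1"
    unfolding sqnorm_def by (simp add: if_distrib[of "\<lambda>x. x^2"] sum.delta cong: if_cong)
  then have "(\<lambda>i. if i = 0 then 1 else 0) \<in> K" unfolding K_def by (simp add: PiE_iff)
  then have "K \<noteq> {}" by blast
  moreover have "continuous_on UNIV (quad N S)"
    unfolding quad_def[abs_def] by (intro continuous_intros continuous_on_product_coordinates)
  ultimately obtain x0 where x0: "x0 \<in> K" "\<And>y. y \<in> K \<Longrightarrow> quad N S x0 \<le> quad N S y"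
    using continuous_attains_inf[OF compact_truncated_unit_sphere[of N, folded K_def], of "quad N S"]
      continuous_on_subset by blast
  have "\<exists>i\<le>N. x0 i \<noteq> 0"
  proof (rule ccontr)
    assume "\<not> (\<exists>i\<le>N. x0 i \<noteq> 0)"
    then have "sqnorm N x0 = 0" unfolding sqnorm_def by (intro sum.neutral) auto
    then show False using x0(1) by (simp add: K_def)
  qed
  then have pos: "quad N S x0 > 0" using S unfolding pos_def_def by blast
  have le: "quad N S x0 \<le> quad N S y" if "\<And>i. i > N \<Longrightarrow> y i = 0" "sqnorm N y = 1" for y
  proof (rule x0(2))
    have "\<bar>y i\<bar> \<le> 1" if "i \<le> N" for i
      using square_le_sqnorm[OF that, of y] \<open>sqnorm N y = 1\<close> by (simp add: abs_square_le_1)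
    then show "y \<in> K" using that unfolding K_def by (auto simp: PiE_iff abs_le_iff)
  qed
  show ?thesis
    by (rule that[OF pos quad_ge_if_ge_on_unit_sphere[OF le]])
qed

lemma quad_sym_product:
  assumes sym: "\<And>i j. i \<le> N \<Longrightarrow> j \<le> N \<Longrightarrow> Q i j = Q j i"
  shows "quad N (\<lambda>i j. mmul N Q M i j + mmul N (transp_mat M) Q i j) p
       = 2 * (\<Sum>i\<le>N. \<Sum>j\<le>N. p i * Q i j * (\<Sum>k\<le>N. M j k * p k))"
proof -
  have QM: "quad N (mmul N Q M) p = (\<Sum>i\<le>N. \<Sum>j\<le>N. p i * Q i j * (\<Sum>k\<le>N. M j k * p k))"
  proof -
    have "quad N (mmul N Q M) p = (\<Sum>i\<le>N. \<Sum>k\<le>N. \<Sum>j\<le>N. p i * Q i j * M j k * p k)"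
      unfolding quad_def mmul_def
      by (intro sum.cong refl) (simp add: sum_distrib_left sum_distrib_right mult.assoc)
    also have "\<dots> = (\<Sum>i\<le>N. \<Sum>j\<le>N. \<Sum>k\<le>N. p i * Q i j * M j k * p k)"
      by (rule sum.cong[OF refl], rule sum.swap)
    also have "\<dots> = (\<Sum>i\<le>N. \<Sum>j\<le>N. p i * Q i j * (\<Sum>k\<le>N. M j k * p k))"
      by (intro sum.cong refl) (simp add: sum_distrib_left mult.assoc)
    finally show ?thesis .
  qed
  have MQ: "quad N (mmul N (transp_mat M) Q) p = (\<Sum>i\<le>N. \<Sum>j\<le>N. p i * Q i j * (\<Sum>k\<le>N. M j k * p k))"
  proof -
    have "quad N (mmul N (transp_mat M) Q) p = (\<Sum>i\<le>N. \<Sum>k\<le>N. \<Sum>j\<le>N. p i * M j i * Q j k * p k)"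
      unfolding quad_def mmul_def transp_mat_def
      by (intro sum.cong refl) (simp add: sum_distrib_left sum_distrib_right mult.assoc)
    also have "\<dots> = (\<Sum>k\<le>N. \<Sum>j\<le>N. \<Sum>i\<le>N. p i * M j i * Q j k * p k)"
      by (subst sum.swap) (rule sum.cong[OF refl], rule sum.swap)
    also have "\<dots> = (\<Sum>k\<le>N. \<Sum>j\<le>N. p k * Q k j * (\<Sum>i\<le>N. M j i * p i))"
      using sym by (intro sum.cong refl) (simp add: sum_distrib_left mult.commute mult.left_commute)
    finally show ?thesis .
  qed
  show ?thesis
    using QM MQ unfolding quad_def by (simp add: sum.distrib algebra_simps)
qed

lemma two_mult_le_weighted_squares:
  fixes e w X :: real
  assumes "e > 0"
  shows "2 * w * X \<le> e * X^2 + w^2 / e"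
proof -
  have "0 \<le> (e * X - w)^2 / e" using assms by simp
  also have "\<dots> = e * X^2 + w^2 / e - 2 * w * X"
    using assms by (simp add: power2_diff field_simps power2_eq_square)
  finally show ?thesis by simp
qed

locale Lyapunov_matrix =
  fixes N :: nat and M Q :: "nat \<Rightarrow> nat \<Rightarrow> real" and \<delta> q \<eta> :: real
  assumes symmetric: "\<And>i j. i \<le> N \<Longrightarrow> j \<le> N \<Longrightarrow> Q i j = Q j i"
    and q_pos: "q > 0" and coercive: "\<And>x. q * sqnorm N x \<le> quad N Q x"
    and \<eta>_pos: "\<eta> > 0"
    and dissipative: "\<And>x. \<eta> * sqnorm N x \<le>
          quad N (\<lambda>i j. - 2 * \<delta> * Q i j - (mmul N Q M i j + mmul N (transp_mat M) Q i j)) x"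
begin

lemma has_derivative_quad:
  assumes "\<And>i. i \<le> N \<Longrightarrow> (p i has_real_derivative p' i) (at t)"
  shows "((\<lambda>s. quad N Q (\<lambda>i. p i s)) has_real_derivative 2 * (\<Sum>i\<le>N. \<Sum>j\<le>N. p i t * Q i j * p' j)) (at t)"
proof -
  have "((\<lambda>s. quad N Q (\<lambda>i. p i s)) has_real_derivative
      (\<Sum>i\<le>N. \<Sum>j\<le>N. p' i * Q i j * p j t + p i t * Q i j * p' j)) (at t)"
    unfolding quad_def using assms by (intro DERIV_sum) (auto intro!: derivative_eq_intros)
  moreover have "(\<Sum>i\<le>N. \<Sum>j\<le>N. p' i * Q i j * p j t) = (\<Sum>i\<le>N. \<Sum>j\<le>N. p i t * Q i j * p' j)"
    using symmetric by (subst sum.swap) (auto intro!: sum.cong simp: mult.commute mult.left_commute)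
  ultimately show ?thesis by (simp add: sum.distrib)
qed

definition feedthrough :: "(nat \<Rightarrow> real) \<Rightarrow> real" where
  "feedthrough l = sqnorm N (\<lambda>i. \<Sum>j\<le>N. Q i j * l j) + 1"

lemma feedthrough_pos: "feedthrough l > 0"
  unfolding feedthrough_def using sqnorm_nonneg by (simp add: add_nonneg_pos)

lemma dissipation_inequality:
  "2 * (\<Sum>i\<le>N. \<Sum>j\<le>N. x i * Q i j * ((\<Sum>k\<le>N. M j k * x k) + l j * w))
     \<le> - 2 * \<delta> * quad N Q x + feedthrough l / \<eta> * w^2"
proof -
  define Ql where "Ql i = (\<Sum>j\<le>N. Q i j * l j)" for i
  let ?X = "\<lambda>i j. mmul N Q M i j + mmul N (transp_mat M) Q i j"
  have \<kappa>: "feedthrough l > 0" "sqnorm N Ql \<le> feedthrough l"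
    using feedthrough_pos[of l] unfolding feedthrough_def Ql_def[symmetric] by auto
  have "(\<Sum>i\<le>N. \<Sum>j\<le>N. x i * Q i j * (l j * w)) = w * (\<Sum>i\<le>N. x i * Ql i)"
    unfolding Ql_def by (simp add: sum_distrib_left sum_distrib_right mult.commute mult.left_commute)
  then have "2 * (\<Sum>i\<le>N. \<Sum>j\<le>N. x i * Q i j * ((\<Sum>k\<le>N. M j k * x k) + l j * w))
      = 2 * (\<Sum>i\<le>N. \<Sum>j\<le>N. x i * Q i j * (\<Sum>k\<le>N. M j k * x k)) + 2 * w * (\<Sum>i\<le>N. x i * Ql i)"
    by (simp add: distrib_left sum.distrib)
  also have "2 * (\<Sum>i\<le>N. \<Sum>j\<le>N. x i * Q i j * (\<Sum>k\<le>N. M j k * x k)) = quad N ?X x"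
    by (rule quad_sym_product[OF symmetric, symmetric])
  also have "quad N ?X x = - 2 * \<delta> * quad N Q x - quad N (\<lambda>i j. - 2 * \<delta> * Q i j - ?X i j) x"
    unfolding quad_def by (simp add: sum_distrib_left sum_subtractf algebra_simps)
  also have "2 * w * (\<Sum>i\<le>N. x i * Ql i) \<le> \<eta> / feedthrough l * (\<Sum>i\<le>N. x i * Ql i)^2 + w^2 / (\<eta> / feedthrough l)"
    using \<eta>_pos \<kappa>(1) by (intro two_mult_le_weighted_squares) simp
  also have "w^2 / (\<eta> / feedthrough l) = feedthrough l / \<eta> * w^2" by simp
  also have "\<eta> / feedthrough l * (\<Sum>i\<le>N. x i * Ql i)^2 \<le> \<eta> * sqnorm N x"
  proof -
    have "(\<Sum>i\<le>N. x i * Ql i)^2 \<le> sqnorm N x * sqnorm N Ql"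
      unfolding sqnorm_def by (rule Cauchy_Schwarz_ineq_sum)
    also have "\<dots> \<le> sqnorm N x * feedthrough l" using \<kappa>(2) sqnorm_nonneg[of N x] by (intro mult_left_mono)
    finally show ?thesis using \<eta>_pos \<kappa>(1) by (simp add: field_simps)
  qed
  finally show ?thesis using dissipative[of x] by linarith
qed

definition ISS_gain :: "(nat \<Rightarrow> real) \<Rightarrow> real" where
  "ISS_gain l = ((\<Sum>i\<le>N. \<Sum>j\<le>N. \<bar>Q i j\<bar>) + feedthrough l / \<eta>) / q"

lemma ISS_gain_pos: "ISS_gain l > 0"
proof -
  have "(\<Sum>i\<le>N. \<Sum>j\<le>N. \<bar>Q i j\<bar>) \<ge> 0" by (intro sum_nonneg) auto
  then have "(\<Sum>i\<le>N. \<Sum>j\<le>N. \<bar>Q i j\<bar>) + feedthrough l / \<eta> > 0"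
    using divide_pos_pos[OF feedthrough_pos \<eta>_pos, of l] by linarith
  then show ?thesis unfolding ISS_gain_def using q_pos by simp
qed

text \<open>The input enters only through a primitive \<open>\<Phi>\<close> of a majorant \<open>\<phi>\<close> of \<open>e\<^bsup>2 \<delta> t\<^esup> w(t)\<^sup>2\<close>,
  so \<open>w\<close> may be unbounded near \<open>t = 0\<close>: \<open>e\<^bsup>2 \<delta> t\<^esup> V(t) - \<kappa> W \<Phi>(t)\<close> is nonincreasing.\<close>

lemma Lyapunov_energy_bound:
  assumes p: "\<And>i. i \<le> N \<Longrightarrow> continuous_on {0..} (p i)"
      "\<And>t i. t > 0 \<Longrightarrow> i \<le> N \<Longrightarrow> (p i has_real_derivative (\<Sum>j\<le>N. M i j * p j t) + l i * w t) (at t)"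
    and \<Phi>: "continuous_on {0..} \<Phi>" "\<And>t. t > 0 \<Longrightarrow> (\<Phi> has_real_derivative \<phi> t) (at t)"
    and w: "\<And>t. t > 0 \<Longrightarrow> exp (2 * \<delta> * t) * (w t)^2 \<le> W * \<phi> t"
    and t: "t \<ge> 0"
  shows "exp (2 * \<delta> * t) * quad N Q (\<lambda>i. p i t)
      \<le> quad N Q (\<lambda>i. p i 0) + feedthrough l / \<eta> * W * (\<Phi> t - \<Phi> 0)"
proof -
  define V where "V s = quad N Q (\<lambda>i. p i s)" for s
  define \<kappa> where "\<kappa> = feedthrough l / \<eta>"
  have \<kappa>: "\<kappa> > 0" unfolding \<kappa>_def using divide_pos_pos[OF feedthrough_pos \<eta>_pos] .
  define \<Psi> where "\<Psi> s = exp (2 * \<delta> * s) * V s - \<kappa> * W * \<Phi> s" for s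
  have "\<Psi> t \<le> \<Psi> 0"
  proof (rule DERIV_nonpos_imp_decreasing_open[OF t])
    show "continuous_on {0..t} \<Psi>"
      unfolding \<Psi>_def V_def quad_def
      by (intro continuous_intros continuous_on_subset[OF p(1)] continuous_on_subset[OF \<Phi>(1)]) auto
    fix s :: real assume s: "0 < s" "s < t"
    define p' where "p' j = (\<Sum>k\<le>N. M j k * p k s) + l j * w s" for j
    define V' where "V' = 2 * (\<Sum>i\<le>N. \<Sum>j\<le>N. p i s * Q i j * p' j)"
    have V': "(V has_real_derivative V') (at s)"
      unfolding V_def V'_def p'_def by (rule has_derivative_quad) (use p(2) s in auto)
    have "V' \<le> - 2 * \<delta> * V s + \<kappa> * (w s)^2"
      unfolding V'_def V_def p'_def \<kappa>_def by (rule dissipation_inequality)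
    then have "exp (2 * \<delta> * s) * V' \<le> exp (2 * \<delta> * s) * (- 2 * \<delta> * V s + \<kappa> * (w s)^2)"
      by (intro mult_left_mono) auto
    moreover have "\<kappa> * (exp (2 * \<delta> * s) * (w s)^2) \<le> \<kappa> * (W * \<phi> s)"
      using w[OF s(1)] \<kappa> by (intro mult_left_mono) auto
    ultimately have "2 * \<delta> * exp (2 * \<delta> * s) * V s + exp (2 * \<delta> * s) * V' - \<kappa> * W * \<phi> s \<le> 0"
      by (simp add: algebra_simps)
    moreover have "(\<Psi> has_real_derivative 2 * \<delta> * exp (2 * \<delta> * s) * V s + exp (2 * \<delta> * s) * V' - \<kappa> * W * \<phi> s) (at s)"
      unfolding \<Psi>_def by (auto intro!: derivative_eq_intros V' \<Phi>(2)[OF s(1)])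
    ultimately show "\<exists>y. (\<Psi> has_real_derivative y) (at s) \<and> y \<le> 0" by blast
  qed
  then have "exp (2 * \<delta> * t) * V t - \<kappa> * W * \<Phi> t \<le> V 0 - \<kappa> * W * \<Phi> 0"
    by (simp add: \<Psi>_def)
  moreover have "\<kappa> * W * (\<Phi> t - \<Phi> 0) = \<kappa> * W * \<Phi> t - \<kappa> * W * \<Phi> 0"
    by (simp add: right_diff_distrib)
  ultimately show ?thesis unfolding V_def \<kappa>_def by linarith
qed

theorem input_to_state_estimate:
  assumes p: "\<And>i. i \<le> N \<Longrightarrow> continuous_on {0..} (p i)"
      "\<And>t i. t > 0 \<Longrightarrow> i \<le> N \<Longrightarrow> (p i has_real_derivative (\<Sum>j\<le>N. M i j * p j t) + l i * w t) (at t)"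
    and \<Phi>: "continuous_on {0..} \<Phi>" "\<Phi> 0 = 0" "\<And>t. t \<ge> 0 \<Longrightarrow> \<Phi> t \<le> \<Phi>_max"
      "\<And>t. t > 0 \<Longrightarrow> (\<Phi> has_real_derivative \<phi> t) (at t)"
    and w: "W \<ge> 0" "\<And>t. t > 0 \<Longrightarrow> exp (2 * \<delta> * t) * (w t)^2 \<le> W * \<phi> t"
    and t: "t \<ge> 0"
  shows "sqnorm N (\<lambda>i. p i t) \<le> exp (- 2 * \<delta> * t) * ISS_gain l * (sqnorm N (\<lambda>i. p i 0) + W * \<Phi>_max)"
proof -
  let ?Qmax = "\<Sum>i\<le>N. \<Sum>j\<le>N. \<bar>Q i j\<bar>" and ?\<kappa> = "feedthrough l / \<eta>"
  let ?E = "exp (2 * \<delta> * t)" and ?X = "ISS_gain l * (sqnorm N (\<lambda>i. p i 0) + W * \<Phi>_max)"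
  have \<kappa>: "?\<kappa> > 0" using divide_pos_pos[OF feedthrough_pos \<eta>_pos] .
  then have \<kappa>W: "?\<kappa> * W \<ge> 0" using w(1) by (simp only: zero_le_mult_iff) simp
  have "\<Phi>_max \<ge> 0" using \<Phi>(3)[of 0] \<Phi>(2) by simp
  have "q * (?E * sqnorm N (\<lambda>i. p i t)) = ?E * (q * sqnorm N (\<lambda>i. p i t))"
    by (simp only: mult.left_commute)
  also have "\<dots> \<le> ?E * quad N Q (\<lambda>i. p i t)"
    using coercive by (intro mult_left_mono) auto
  also have "\<dots> \<le> quad N Q (\<lambda>i. p i 0) + ?\<kappa> * W * \<Phi> t"
    using Lyapunov_energy_bound[OF p \<Phi>(1,4) w(2) t] \<Phi>(2) by simp
  also have "\<dots> \<le> ?Qmax * sqnorm N (\<lambda>i. p i 0) + ?\<kappa> * W * \<Phi>_max"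
    using \<Phi>(3)[OF t] by (intro add_mono quad_le_sqnorm mult_left_mono \<kappa>W)
  also have "\<dots> \<le> q * ?X"
  proof -
    have "0 \<le> ?Qmax * (W * \<Phi>_max)"
      using w(1) \<open>\<Phi>_max \<ge> 0\<close> by (intro mult_nonneg_nonneg sum_nonneg) auto
    moreover have "0 \<le> ?\<kappa> * sqnorm N (\<lambda>i. p i 0)"
      using \<kappa> sqnorm_nonneg by (intro mult_nonneg_nonneg) (auto simp only: less_imp_le)
    moreover have "q * ISS_gain l = ?Qmax + ?\<kappa>" using q_pos by (simp add: ISS_gain_def)
    then have "q * ?X = (?Qmax + ?\<kappa>) * (sqnorm N (\<lambda>i. p i 0) + W * \<Phi>_max)"
      by (simp only: mult.assoc[symmetric])
    then have "q * ?X = ?Qmax * sqnorm N (\<lambda>i. p i 0) + ?\<kappa> * W * \<Phi>_max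
        + (?Qmax * (W * \<Phi>_max) + ?\<kappa> * sqnorm N (\<lambda>i. p i 0))"
      by (simp add: algebra_simps)
    ultimately show ?thesis by linarith
  qed
  finally have "?E * sqnorm N (\<lambda>i. p i t) \<le> ?X"
    using q_pos by (rule mult_left_le_imp_le)
  then have "exp (- 2 * \<delta> * t) * (?E * sqnorm N (\<lambda>i. p i t)) \<le> exp (- 2 * \<delta> * t) * ?X"
    by (intro mult_left_mono) auto
  moreover have "exp (- 2 * \<delta> * t) * (?E * sqnorm N (\<lambda>i. p i t)) = sqnorm N (\<lambda>i. p i t)"
    by (simp add: mult.assoc[symmetric] exp_add[symmetric])
  ultimately show ?thesis by (simp only: mult.assoc)
qed

end

section \<open>Modal dynamics of solutions\<close>

lemma neumann_coeff_Lfun: "neumann_coeff (Lfun N l) n = (if n \<le> N then l n else 0)"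
  by (simp add: Lfun_eq_cos_poly neumann_coeff_cos_poly)

lemma is_solution_L2: "is_solution a N l e0 e \<Longrightarrow> t \<ge> 0 \<Longrightarrow> L2 (\<lambda>x. e x t)"
  by (simp add: is_solution_def)

lemma neumann_coeff_diff:
  "L2 f \<Longrightarrow> L2 g \<Longrightarrow> neumann_coeff (\<lambda>x. f x - g x) n = neumann_coeff f n - neumann_coeff g n"
  unfolding neumann_coeff_def by (rule inner_L2_diff_left[OF _ _ L2_phi])

lemma neumann_coeff_solution_at_0:
  assumes sol: "is_solution a N l e0 e" and e0: "L2 e0"
  shows "neumann_coeff (\<lambda>x. e x 0) n = neumann_coeff e0 n"
proof -
  have L: "L2 (\<lambda>x. e x 0)" using is_solution_L2[OF sol] by simp
  have "sqdist_L2 (\<lambda>x. e x 0) e0 = 0"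
    using sol by (simp add: is_solution_def L2norm_eq_sqrt_inner_L2)
  then have "neumann_coeff (\<lambda>x. e x 0 - e0 x) n = 0"
    unfolding neumann_coeff_def by (rule inner_L2_eq_0_if_self_eq_0[OF L2_diff[OF L e0] L2_phi])
  then show ?thesis using neumann_coeff_diff[OF L e0] by simp
qed

lemma continuous_on_neumann_coeff_solution:
  assumes sol: "is_solution a N l e0 e"
  shows "continuous_on {0..} (\<lambda>t. neumann_coeff (\<lambda>x. e x t) n)"
  unfolding continuous_on_def
proof
  fix t0 :: real assume "t0 \<in> {0..}"
  then have t0: "t0 \<ge> 0" by simp
  have "\<forall>\<^sub>F t in at t0 within {0..}. t \<in> {0..}" by (simp add: eventually_at_filter)
  then have "\<forall>\<^sub>F t in at t0 within {0..}.
      norm (neumann_coeff (\<lambda>x. e x t) n - neumann_coeff (\<lambda>x. e x t0) n) \<le> L2norm (\<lambda>x. e x t - e x t0)"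
  proof (rule eventually_mono)
    fix t :: real assume "t \<in> {0..}"
    then have L: "L2 (\<lambda>x. e x t)" "L2 (\<lambda>x. e x t0)" using is_solution_L2[OF sol] t0 by auto
    have "neumann_coeff (\<lambda>x. e x t) n - neumann_coeff (\<lambda>x. e x t0) n = inner_L2 (\<lambda>x. e x t - e x t0) (phi n)"
      unfolding neumann_coeff_def by (rule inner_L2_diff_left[OF L L2_phi, symmetric])
    also have "\<bar>\<dots>\<bar> \<le> sqrt (sqdist_L2 (\<lambda>x. e x t) (\<lambda>x. e x t0)) * sqrt (inner_L2 (phi n) (phi n))"
      by (rule inner_L2_Cauchy_Schwarz[OF L2_diff[OF L] L2_phi])
    finally show "norm (neumann_coeff (\<lambda>x. e x t) n - neumann_coeff (\<lambda>x. e x t0) n) \<le> L2norm (\<lambda>x. e x t - e x t0)"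
      by (simp add: inner_L2_phi_phi L2norm_eq_sqrt_inner_L2)
  qed
  moreover have "((\<lambda>t. L2norm (\<lambda>x. e x t - e x t0)) \<longlongrightarrow> 0) (at t0 within {0..})"
    using sol t0 by (simp add: is_solution_def)
  ultimately have "((\<lambda>t. neumann_coeff (\<lambda>x. e x t) n - neumann_coeff (\<lambda>x. e x t0) n) \<longlongrightarrow> 0) (at t0 within {0..})"
    by (rule Lim_null_comparison)
  then show "((\<lambda>t. neumann_coeff (\<lambda>x. e x t) n) \<longlongrightarrow> neumann_coeff (\<lambda>x. e x t0) n) (at t0 within {0..})"
    by (simp add: LIM_zero_iff)
qed

lemma neumann_coeff_solution_has_derivative:
  assumes "is_solution a N l e0 e" "t > 0"
  shows "((\<lambda>s. neumann_coeff (\<lambda>x. e x s) n) has_real_derivative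
           (a - lam n) * neumann_coeff (\<lambda>x. e x t) n + e 0 t * (if n \<le> N then l n else 0)) (at t)"
proof -
  have "((\<lambda>s. integral {0..1} (\<lambda>x. e x s * phi n x)) has_real_derivative
      (a - lam n) * integral {0..1} (\<lambda>x. e x t * phi n x) + e 0 t * integral {0..1} (\<lambda>x. Lfun N l x * phi n x)) (at t)"
    using assms unfolding is_solution_def by blast
  then show ?thesis
    using neumann_coeff_Lfun[of N l n] unfolding neumann_coeff_def inner_L2_def by simp
qed

lemma continuous_on_eq_0_if_sqnorm_L2_eq_0:
  assumes h: "continuous_on {0..1} h" and "inner_L2 h h = 0" and x: "x \<in> {0..1::real}"
  shows "h x = 0"
proof -
  have c: "continuous_on (cbox 0 1) (\<lambda>x. h x * h x)"
    using h by (auto intro!: continuous_intros simp: cbox_interval)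
  have "(\<lambda>x. h x * h x) integrable_on {0..1}"
    by (intro integrable_continuous_interval continuous_intros h)
  then have "((\<lambda>x. h x * h x) has_integral 0) (cbox 0 1)"
    using assms(2) by (simp add: inner_L2_def cbox_interval) (metis has_integral_integral)
  then have "h x * h x = 0"
    using has_integral_0_cbox_imp_0[OF c _ _ , of x] x by (auto simp: cbox_interval box_real)
  then show ?thesis by simp
qed

text \<open>A continuous function without modes beyond \<open>N\<close> coincides everywhere, and not just
  almost everywhere, with its cosine polynomial.\<close>

lemma continuous_eq_cos_poly_if_modes_vanish:
  assumes h: "continuous_on {0..1} h" and modes: "\<And>n. n > N \<Longrightarrow> neumann_coeff h n = 0"
    and x: "x \<in> {0..1}"
  shows "h x = cos_poly (neumann_coeff h) N x"
proof -
  define r where "r x = h x - cos_poly (neumann_coeff h) N x" for x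
  have L: "L2 r" unfolding r_def[abs_def] using h by (intro L2_diff L2_cos_poly continuous_on_imp_L2)
  have "neumann_coeff r m = neumann_coeff h m - neumann_coeff (cos_poly (neumann_coeff h) N) m" for m
    unfolding r_def[abs_def] neumann_coeff_def
    using h by (intro inner_L2_diff_left continuous_on_imp_L2 L2_cos_poly L2_phi)
  then have "neumann_coeff r m = 0" for m
    using modes[of m] by (simp add: neumann_coeff_cos_poly)
  then have "inner_L2 r r = 0" using Parseval[OF L] by (simp add: sums_iff)
  moreover have "continuous_on {0..1} r"
    unfolding r_def[abs_def] by (intro continuous_intros h continuous_on_cos_poly)
  ultimately show ?thesis using continuous_on_eq_0_if_sqnorm_L2_eq_0 x by (fastforce simp: r_def)
qed

lemma linear_ode_vanishes:
  fixes P :: "real \<Rightarrow> real"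
  assumes "continuous_on {0..} P" "P 0 = 0" "\<And>t. t > 0 \<Longrightarrow> (P has_real_derivative \<mu> * P t) (at t)"
    and "t \<ge> 0"
  shows "P t = 0"
proof (cases "t = 0")
  case False
  define h where "h s = exp (- \<mu> * s) * P s" for s
  have "h t = h 0"
  proof (rule DERIV_isconst_end[of 0 t h])
    show "continuous_on {0..t} h" unfolding h_def[abs_def]
      by (intro continuous_intros continuous_on_subset[OF assms(1)]) auto
    show "(h has_real_derivative 0) (at s)" if "0 < s" "s < t" for s
      unfolding h_def[abs_def] using that
      by (auto intro!: derivative_eq_intros assms(3) simp: algebra_simps)
  qed (use False assms(4) in auto)
  then show ?thesis using assms(2) by (simp add: h_def)
qed (use assms(2) in simp)

lemma ALC_row:
  "i \<le> N \<Longrightarrow> (\<Sum>j\<le>N. ALC a l i j * x j) = (a - lam i) * x i + l i * (\<Sum>j\<le>N. Cvec j * x j)"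
  by (simp add: ALC_def Amat_def distrib_right sum.distrib sum_distrib_left mult.assoc
      if_distrib[of "\<lambda>y. y * _"] sum.delta cong: if_cong)

section \<open>Uniqueness\<close>

locale observer_error_system = Lyapunov_matrix N "ALC a l" Q \<delta> q \<eta>
  for a :: real and l :: "nat \<Rightarrow> real" and N Q \<delta> q \<eta>
begin

lemma closed_loop_zero_solution:
  assumes "\<And>i. i \<le> N \<Longrightarrow> continuous_on {0..} (p i)" "\<And>i. i \<le> N \<Longrightarrow> p i 0 = 0"
    and "\<And>s i. s > 0 \<Longrightarrow> i \<le> N \<Longrightarrow> (p i has_real_derivative (\<Sum>j\<le>N. ALC a l i j * p j s)) (at s)"
    and "i \<le> N" "t \<ge> 0"
  shows "p i t = 0"
proof -
  have "sqnorm N (\<lambda>i. p i t) \<le> exp (- 2 * \<delta> * t) * ISS_gain l * (sqnorm N (\<lambda>i. p i 0) + 0 * 0)"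
    using assms(1,3,5)
    by (intro input_to_state_estimate[where w = "\<lambda>t. 0" and \<Phi> = "\<lambda>t. 0" and \<phi> = "\<lambda>t. 0"]) auto
  then have "sqnorm N (\<lambda>i. p i t) \<le> 0" using assms(2) by (simp add: sqnorm_def)
  then have "(p i t)^2 \<le> 0" using square_le_sqnorm[OF assms(4), of "\<lambda>i. p i t"] by linarith
  then show ?thesis by simp
qed

text \<open>The coefficients of the difference of two solutions solve the homogeneous modal system:
  beyond \<open>N\<close> the modes are decoupled and start at \<open>0\<close>; the point value at \<open>x = 0\<close> is then
  the finite sum \<open>C p\<close>, so the first \<open>N + 1\<close> modes solve \<open>p' = (A + L C) p\<close>, \<open>p(0) = 0\<close>,
  and vanish by the Lyapunov estimate with zero input.\<close>

theorem solution_unique: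
  assumes e1: "is_solution a N l e0 e1" and e2: "is_solution a N l e0 e2" and e0: "L2 e0"
    and t: "t \<ge> 0"
  shows "L2norm (\<lambda>x. e2 x t - e1 x t) = 0"
proof -
  define P where "P n t = neumann_coeff (\<lambda>x. e2 x t) n - neumann_coeff (\<lambda>x. e1 x t) n" for n t
  have P_cont: "continuous_on {0..} (P n)" for n
    unfolding P_def[abs_def]
    by (intro continuous_intros continuous_on_neumann_coeff_solution[OF e1] continuous_on_neumann_coeff_solution[OF e2])
  have P_deriv: "(P n has_real_derivative (a - lam n) * P n s + (e2 0 s - e1 0 s) * (if n \<le> N then l n else 0)) (at s)"
    if "s > 0" for n s
    using DERIV_diff[OF neumann_coeff_solution_has_derivative[OF e2 that] neumann_coeff_solution_has_derivative[OF e1 that]]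
    unfolding P_def[abs_def] by (simp add: algebra_simps)
  have P0: "P n 0 = 0" for n
    by (simp add: P_def neumann_coeff_solution_at_0[OF e1 e0] neumann_coeff_solution_at_0[OF e2 e0])
  have tail: "P n s = 0" if "n > N" "s \<ge> 0" for n s
  proof (rule linear_ode_vanishes[OF P_cont P0 _ that(2)])
    show "(P n has_real_derivative (a - lam n) * P n t) (at t)" if "t > 0" for t
      using P_deriv[OF that, of n] \<open>n > N\<close> by simp
  qed
  have boundary: "e2 0 s - e1 0 s = (\<Sum>j\<le>N. Cvec j * P j s)" if "s > 0" for s :: real
  proof -
    have L: "L2 (\<lambda>x. e2 x s)" "L2 (\<lambda>x. e1 x s)" using is_solution_L2 e1 e2 that by auto
    have cont: "continuous_on {0..1} (\<lambda>x. e2 x s - e1 x s)"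
      using e1 e2 that by (intro continuous_intros) (auto simp: is_solution_def)
    have coeff: "neumann_coeff (\<lambda>x. e2 x s - e1 x s) n = P n s" for n
      unfolding P_def by (rule neumann_coeff_diff[OF L])
    have "(\<lambda>x. e2 x s - e1 x s) 0 = cos_poly (neumann_coeff (\<lambda>x. e2 x s - e1 x s)) N 0"
      by (rule continuous_eq_cos_poly_if_modes_vanish[OF cont]) (use coeff tail that in auto)
    then show ?thesis by (simp add: cos_poly_def coeff phi_at_0 mult.commute)
  qed
  have "P n t = 0" for n
  proof (cases "n \<le> N")
    case True
    show ?thesis
    proof (rule closed_loop_zero_solution[OF P_cont P0 _ True t])
      show "(P i has_real_derivative (\<Sum>j\<le>N. ALC a l i j * P j s)) (at s)" if "s > 0" "i \<le> N" for s i
        unfolding ALC_row[OF that(2)] using P_deriv[of s i] boundary[of s] that by (simp add: mult.commute)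
    qed
  qed (use tail t in auto)
  moreover have L: "L2 (\<lambda>x. e2 x t)" "L2 (\<lambda>x. e1 x t)" using is_solution_L2 e1 e2 t by auto
  ultimately have "inner_L2 (\<lambda>x. e2 x t - e1 x t) (\<lambda>x. e2 x t - e1 x t) = 0"
    using Parseval[OF L2_diff[OF L]] neumann_coeff_diff[OF L] by (simp add: P_def sums_iff)
  then show ?thesis by (simp add: L2norm_eq_sqrt_inner_L2)
qed
end

section \<open>Construction of the solution\<close>

lemma lam_strict_mono: "n < m \<Longrightarrow> lam n < lam m"
  unfolding lam_def by (intro power_strict_mono mult_strict_right_mono) auto

lemma suminf_Cauchy_Schwarz:
  fixes u v :: "nat \<Rightarrow> real"
  assumes u: "summable (\<lambda>n. (u n)^2)" and v: "summable (\<lambda>n. (v n)^2)" and uv: "summable (\<lambda>n. u n * v n)"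
  shows "(\<Sum>n. u n * v n)^2 \<le> (\<Sum>n. (u n)^2) * (\<Sum>n. (v n)^2)"
proof (rule LIMSEQ_le_const2)
  show "(\<lambda>K. (\<Sum>n<K. u n * v n)^2) \<longlonglongrightarrow> (\<Sum>n. u n * v n)^2"
    by (intro tendsto_power summable_LIMSEQ uv)
  have "(\<Sum>n<K. u n * v n)^2 \<le> (\<Sum>n. (u n)^2) * (\<Sum>n. (v n)^2)" for K
  proof -
    have "(\<Sum>n<K. u n * v n)^2 \<le> (\<Sum>n<K. (u n)^2) * (\<Sum>n<K. (v n)^2)" by (rule Cauchy_Schwarz_ineq_sum)
    also have "\<dots> \<le> (\<Sum>n. (u n)^2) * (\<Sum>n. (v n)^2)"
      by (intro mult_mono sum_le_suminf u v) (auto intro: sum_nonneg suminf_nonneg u v)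
    finally show ?thesis .
  qed
  then show "\<exists>N. \<forall>K\<ge>N. (\<Sum>n<K. u n * v n)^2 \<le> (\<Sum>n. (u n)^2) * (\<Sum>n. (v n)^2)" by blast
qed

locale tail_stable =
  fixes a \<delta> :: real and N :: nat
  assumes \<delta>_pos: "\<delta> > 0" and tail_decay: "\<And>n. n > N \<Longrightarrow> a - lam n < - \<delta>"
begin

definition \<mu> :: "nat \<Rightarrow> real" where "\<mu> n = a - lam n"

definition tail_indicator :: "nat \<Rightarrow> real" where "tail_indicator m = (if m > N then 1 else 0)"

text \<open>By Cauchy--Schwarz, \<open>\<Sum>\<^bsub>m > N\<^esub> e\<^bsup>2 (\<delta> + \<mu>\<^sub>m) t\<^esup>\<close> dominates \<open>e\<^bsup>2 \<delta> t\<^esup> w(t)\<^sup>2 / (2 \<parallel>e\<^sub>0\<parallel>\<^sup>2)\<close>,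
  where \<open>w\<close> is the trace at \<open>x = 0\<close> of the tail modes.\<close>

definition tail_energy :: "real \<Rightarrow> real" where
  "tail_energy = exp_sum_integral tail_indicator (\<lambda>m. 2 * (\<delta> + \<mu> m))"

definition tail_energy_bound :: real where
  "tail_energy_bound = (\<Sum>m. \<bar>tail_indicator m\<bar> / \<bar>2 * (\<delta> + \<mu> m)\<bar>)"

lemma \<mu>_tail: "n > N \<Longrightarrow> \<mu> n < - \<delta>"
  using tail_decay by (simp add: \<mu>_def)

lemma decaying_exp_sum_tail: "decaying_exp_sum tail_indicator (\<lambda>m. 2 * (\<delta> + \<mu> m))"
proof
  show "tail_indicator m = 0 \<or> 2 * (\<delta> + \<mu> m) < 0" for m
    using \<mu>_tail[of m] by (auto simp: tail_indicator_def)
  show "summable (\<lambda>m. \<bar>tail_indicator m\<bar> / \<bar>2 * (\<delta> + \<mu> m)\<bar>)"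
  proof (rule summable_if_abs_le)
    show "\<bar>\<bar>tail_indicator m\<bar> / \<bar>2 * (\<delta> + \<mu> m)\<bar>\<bar> \<le> 1/2 * (1 / \<bar>(real m * pi)^2 - (\<delta> + a)\<bar>)" for m
    proof -
      have "2 * (\<delta> + \<mu> m) = 2 * ((\<delta> + a) - (real m * pi)^2)" by (simp add: \<mu>_def lam_def)
      then have "\<bar>2 * (\<delta> + \<mu> m)\<bar> = 2 * \<bar>(real m * pi)^2 - (\<delta> + a)\<bar>"
        by (simp only: abs_mult abs_minus_commute)
      then show ?thesis by (simp add: tail_indicator_def)
    qed
    show "summable (\<lambda>m. 1/2 * (1 / \<bar>(real m * pi)^2 - (\<delta> + a)\<bar>))"
      by (intro summable_mult summable_inverse_eigenvalue_gap)
  qed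
  fix s :: real assume "s > 0"
  show "summable (\<lambda>m. \<bar>tail_indicator m\<bar> * exp (2 * (\<delta> + \<mu> m) * s))"
  proof (rule summable_if_abs_le)
    show "\<bar>\<bar>tail_indicator m\<bar> * exp (2 * (\<delta> + \<mu> m) * s)\<bar> \<le> exp ((\<delta> + a - (real m * pi)^2) * (2 * s))" for m
      by (simp add: tail_indicator_def \<mu>_def lam_def algebra_simps)
    show "summable (\<lambda>m. exp ((\<delta> + a - (real m * pi)^2) * (2 * s)))"
      using \<open>s > 0\<close> by (intro summable_exp_eigenvalue) simp
  qed
qed

lemma tail_energy_bound_nonneg: "tail_energy_bound \<ge> 0"
  unfolding tail_energy_bound_def
  by (intro suminf_nonneg decaying_exp_sum.summable_ratio[OF decaying_exp_sum_tail]) auto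

end

locale modal_construction = tail_stable +
  fixes l :: "nat \<Rightarrow> real" and e0 :: "real \<Rightarrow> real"
  assumes e0: "L2 e0"
begin

definition b :: "nat \<Rightarrow> real" where "b n = neumann_coeff e0 n"

definition energy :: real where "energy = inner_L2 e0 e0"

lemma b_sums: "(\<lambda>n. (b n)^2) sums energy"
  unfolding b_def energy_def by (rule Parseval[OF e0])

lemma energy_nonneg: "energy \<ge> 0"
  unfolding energy_def by (rule inner_L2_self_nonneg)

lemma abs_b_le: "\<bar>b n\<bar> \<le> sqrt energy"
proof -
  have "(b n)^2 \<le> (\<Sum>m\<le>n. (b m)^2)" by (intro member_le_sum) auto
  also have "\<dots> \<le> energy" unfolding b_def energy_def by (rule Bessel_inequality[OF e0])
  finally show ?thesis by (simp add: real_le_rsqrt)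
qed

text \<open>The tail modes \<open>n > N\<close> do not feel the output injection and decay freely; their trace
  at \<open>x = 0\<close> is \<open>w\<close>.\<close>

definition tail_weight :: "nat \<Rightarrow> real" where
  "tail_weight m = (if m > N then sqrt 2 * b m else 0)"

definition w :: "real \<Rightarrow> real" where "w = exp_sum tail_weight \<mu>"

lemma abs_tail_weight_le: "\<bar>tail_weight m\<bar> \<le> sqrt 2 * sqrt energy"
  unfolding tail_weight_def using abs_b_le[of m] energy_nonneg by (auto simp: abs_mult)

lemma summable_w: "t > 0 \<Longrightarrow> summable (\<lambda>m. tail_weight m * exp (\<mu> m * t))"
proof (rule summable_if_abs_le)
  show "\<bar>tail_weight m * exp (\<mu> m * t)\<bar> \<le> sqrt 2 * sqrt energy * exp ((a - (real m * pi)^2) * t)" for m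
    using abs_tail_weight_le[of m] by (simp add: \<mu>_def lam_def abs_mult mult_right_mono)
  show "t > 0 \<Longrightarrow> summable (\<lambda>m. sqrt 2 * sqrt energy * exp ((a - (real m * pi)^2) * t))"
    by (intro summable_mult summable_exp_eigenvalue)
qed

text \<open>\<open>R n t = \<integral>\<^sub>0\<^sup>t e\<^bsup>- \<mu>\<^sub>n s\<^esup> w(s) ds\<close>, computed termwise since \<open>w\<close> is singular at \<open>0\<close>.\<close>

definition R :: "nat \<Rightarrow> real \<Rightarrow> real" where
  "R n = exp_sum_integral tail_weight (\<lambda>m. \<mu> m - \<mu> n)"

lemma decaying_exp_sum_R: "n \<le> N \<Longrightarrow> decaying_exp_sum tail_weight (\<lambda>m. \<mu> m - \<mu> n)"
proof
  assume n: "n \<le> N"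
  show "tail_weight m = 0 \<or> \<mu> m - \<mu> n < 0" for m
    using lam_strict_mono[of n m] n by (auto simp: tail_weight_def \<mu>_def)
  show "summable (\<lambda>m. \<bar>tail_weight m\<bar> / \<bar>\<mu> m - \<mu> n\<bar>)"
  proof (rule summable_if_abs_le)
    show "\<bar>\<bar>tail_weight m\<bar> / \<bar>\<mu> m - \<mu> n\<bar>\<bar> \<le> sqrt 2 * sqrt energy * (1 / \<bar>(real m * pi)^2 - lam n\<bar>)" for m
    proof -
      have "\<bar>\<mu> m - \<mu> n\<bar> = \<bar>(real m * pi)^2 - lam n\<bar>" by (simp add: \<mu>_def lam_def abs_minus_commute)
      then show ?thesis using abs_tail_weight_le[of m] by (simp add: divide_right_mono)
    qed
    show "summable (\<lambda>m. sqrt 2 * sqrt energy * (1 / \<bar>(real m * pi)^2 - lam n\<bar>))"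
      by (intro summable_mult summable_inverse_eigenvalue_gap)
  qed
  fix s :: real assume "s > 0"
  show "summable (\<lambda>m. \<bar>tail_weight m\<bar> * exp ((\<mu> m - \<mu> n) * s))"
  proof (rule summable_if_abs_le)
    show "\<bar>\<bar>tail_weight m\<bar> * exp ((\<mu> m - \<mu> n) * s)\<bar> \<le> sqrt 2 * sqrt energy * exp ((lam n - (real m * pi)^2) * s)" for m
      using abs_tail_weight_le[of m] by (simp add: \<mu>_def lam_def abs_mult mult_right_mono)
    show "summable (\<lambda>m. sqrt 2 * sqrt energy * exp ((lam n - (real m * pi)^2) * s))"
      using \<open>s > 0\<close> by (intro summable_mult summable_exp_eigenvalue)
  qed
qed

lemma R_has_derivative:
  assumes "n \<le> N" "t > 0"
  shows "(R n has_real_derivative exp (- \<mu> n * t) * w t) (at t)"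
proof -
  have "exp_sum tail_weight (\<lambda>m. \<mu> m - \<mu> n) t = (\<Sum>m. exp (- \<mu> n * t) * (tail_weight m * exp (\<mu> m * t)))"
    unfolding exp_sum_def by (intro suminf_cong) (simp add: exp_add[symmetric] algebra_simps)
  also have "\<dots> = exp (- \<mu> n * t) * w t"
    unfolding w_def exp_sum_def by (rule suminf_mult[OF summable_w[OF assms(2)]])
  finally show ?thesis
    using decaying_exp_sum.integral_has_derivative[OF decaying_exp_sum_R[OF assms(1)] assms(2)]
    by (simp add: R_def)
qed

lemma continuous_on_R: "n \<le> N \<Longrightarrow> continuous_on {0..} (R n)"
  unfolding R_def using decaying_exp_sum.continuous_on_integral[OF decaying_exp_sum_R] .

text \<open>The head modes obey \<open>c\<^sub>n' = \<mu>\<^sub>n c\<^sub>n + l\<^sub>n y\<close>, \<open>n \<le> N\<close>, where \<open>y(t) = w(t) + z(t)\<close> is the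
  trace at \<open>x = 0\<close> and \<open>z = \<Sum>\<^bsub>j \<le> N\<^esub> C\<^sub>j c\<^sub>j\<close> its head part. Inserting the variation of
  constants formula for \<open>c\<^sub>n\<close> into the definition of \<open>z\<close> turns the feedback loop into the
  scalar Volterra equation \<open>z = g + volterra_op N k \<mu> z\<close>.\<close>

definition k :: "nat \<Rightarrow> real" where "k n = Cvec n * l n"

definition g :: "real \<Rightarrow> real" where
  "g t = (\<Sum>n\<le>N. Cvec n * exp (\<mu> n * t) * b n) + (\<Sum>n\<le>N. k n * exp (\<mu> n * t) * R n t)"

definition z :: "real \<Rightarrow> real" where
  "z = (SOME z. continuous_on {0..} z \<and> (\<forall>t\<ge>0. z t = g t + volterra_op N k \<mu> z t))"

lemma continuous_on_g: "continuous_on {0..} g"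
  unfolding g_def[abs_def] by (intro continuous_intros continuous_on_R) auto

lemma z_solves_volterra: "continuous_on {0..} z" "\<And>t. t \<ge> 0 \<Longrightarrow> z t = g t + volterra_op N k \<mu> z t"
proof -
  obtain z' where "continuous_on {0..} z'" "\<And>t. t \<ge> 0 \<Longrightarrow> z' t = g t + volterra_op N k \<mu> z' t"
    using volterra_solution_exists[OF continuous_on_g] by metis
  then have "\<exists>z. continuous_on {0..} z \<and> (\<forall>t\<ge>0. z t = g t + volterra_op N k \<mu> z t)" by blast
  then have "continuous_on {0..} z \<and> (\<forall>t\<ge>0. z t = g t + volterra_op N k \<mu> z t)"
    unfolding z_def by (rule someI_ex)
  then show "continuous_on {0..} z" "\<And>t. t \<ge> 0 \<Longrightarrow> z t = g t + volterra_op N k \<mu> z t" by auto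
qed

definition Z :: "nat \<Rightarrow> real \<Rightarrow> real" where
  "Z n t = integral {0..t} (\<lambda>s. exp (- \<mu> n * s) * z s)"

definition c :: "nat \<Rightarrow> real \<Rightarrow> real" where
  "c n t = exp (\<mu> n * t) * (b n + (if n \<le> N then l n * (R n t + Z n t) else 0))"

definition y :: "real \<Rightarrow> real" where "y t = w t + z t"

lemma c_at_0: "c n 0 = b n"
  by (simp add: c_def R_def decaying_exp_sum.integral_at_0[OF decaying_exp_sum_R] Z_def)

lemma continuous_on_c: "continuous_on {0..} (c n)"
proof -
  have "continuous_on {0..} (Z n)"
    unfolding Z_def[abs_def] by (intro continuous_on_indefinite_integral_atLeast continuous_intros z_solves_volterra(1))
  then show ?thesis
    unfolding c_def[abs_def] by (cases "n \<le> N") (auto intro!: continuous_intros continuous_on_R)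
qed

lemma c_has_derivative:
  assumes t: "t > 0"
  shows "(c n has_real_derivative \<mu> n * c n t + (if n \<le> N then l n else 0) * y t) (at t)"
proof (cases "n \<le> N")
  case True
  have Zd: "(Z n has_real_derivative exp (- \<mu> n * t) * z t) (at t)"
    unfolding Z_def[abs_def] by (rule indefinite_integral_has_real_derivative[OF _ t]) (intro continuous_intros z_solves_volterra(1))
  have "c n = (\<lambda>t. exp (\<mu> n * t) * (b n + l n * (R n t + Z n t)))"
    using True by (simp add: c_def fun_eq_iff)
  then have "(c n has_real_derivative \<mu> n * exp (\<mu> n * t) * (b n + l n * (R n t + Z n t))
          + exp (\<mu> n * t) * (l n * (exp (- \<mu> n * t) * w t + exp (- \<mu> n * t) * z t))) (at t)"
    using R_has_derivative[OF True t] Zd by (auto intro!: derivative_eq_intros)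
  moreover have "\<mu> n * exp (\<mu> n * t) * (b n + l n * (R n t + Z n t))
          + exp (\<mu> n * t) * (l n * (exp (- \<mu> n * t) * w t + exp (- \<mu> n * t) * z t))
        = \<mu> n * c n t + (if n \<le> N then l n else 0) * y t"
    using True by (simp add: c_def y_def algebra_simps exp_add[symmetric])
  ultimately show ?thesis by simp
next
  case False
  have "(c n has_real_derivative \<mu> n * exp (\<mu> n * t) * b n) (at t)"
    unfolding c_def[abs_def] using False by (auto intro!: derivative_eq_intros)
  then show ?thesis using False by (simp add: c_def mult.assoc)
qed

lemma c_tail: "n > N \<Longrightarrow> c n t = exp (\<mu> n * t) * b n"
  by (simp add: c_def)

lemma abs_c_tail_le: "n > N \<Longrightarrow> t \<ge> 0 \<Longrightarrow> \<bar>c n t\<bar> \<le> \<bar>b n\<bar>"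
proof -
  assume n: "n > N" and t: "t \<ge> 0"
  have "\<mu> n * t \<le> 0" using \<mu>_tail[OF n] \<delta>_pos t by (simp add: mult_nonpos_nonneg)
  then show ?thesis using n by (simp add: c_tail abs_mult mult_left_le_one_le)
qed

lemma summable_abs_c:
  assumes t: "t > 0"
  shows "summable (\<lambda>n. \<bar>c n t\<bar>)"
proof (rule summable_if_abs_le)
  show "\<bar>\<bar>c n t\<bar>\<bar> \<le> (if n \<le> N then \<bar>c n t\<bar> else 0) + sqrt energy * exp ((a - (real n * pi)^2) * t)" for n
  proof (cases "n \<le> N")
    case False
    then have "\<bar>c n t\<bar> = exp (\<mu> n * t) * \<bar>b n\<bar>" by (simp add: c_tail abs_mult)
    also have "\<dots> \<le> exp (\<mu> n * t) * sqrt energy" by (intro mult_left_mono abs_b_le) auto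
    finally show ?thesis using False by (simp add: \<mu>_def lam_def mult.commute)
  qed (simp add: energy_nonneg)
  show "summable (\<lambda>n. (if n \<le> N then \<bar>c n t\<bar> else 0) + sqrt energy * exp ((a - (real n * pi)^2) * t))"
    using t by (intro summable_add summable_mult summable_exp_eigenvalue summable_finite[of "{..N}"]) auto
qed

lemma z_eq_head_trace: "t \<ge> 0 \<Longrightarrow> z t = (\<Sum>j\<le>N. Cvec j * c j t)"
proof -
  assume t: "t \<ge> 0"
  have "(\<Sum>j\<le>N. Cvec j * c j t) = (\<Sum>j\<le>N. Cvec j * exp (\<mu> j * t) * b j) +
         (\<Sum>j\<le>N. k j * exp (\<mu> j * t) * R j t) + (\<Sum>j\<le>N. k j * exp (\<mu> j * t) * Z j t)"
    by (simp add: c_def k_def sum.distrib[symmetric] algebra_simps)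
  also have "(\<Sum>j\<le>N. k j * exp (\<mu> j * t) * Z j t) = volterra_op N k \<mu> z t"
    by (simp add: volterra_op_def Z_def)
  finally show ?thesis using z_solves_volterra(2)[OF t] by (simp add: g_def)
qed

lemma trace_eq_y:
  assumes t: "t > 0"
  shows "(\<Sum>n. c n t * phi n 0) = y t"
proof -
  have split: "c n t * phi n 0 = (if n \<le> N then Cvec n * c n t else 0) + tail_weight n * exp (\<mu> n * t)" for n
    by (cases "n \<le> N") (auto simp: tail_weight_def c_tail phi_at_0 Cvec_def)
  have "(\<Sum>n. c n t * phi n 0) = (\<Sum>n. if n \<le> N then Cvec n * c n t else 0) + (\<Sum>n. tail_weight n * exp (\<mu> n * t))"
    unfolding split by (rule suminf_add[OF summable_finite[of "{..N}"] summable_w[OF t], symmetric]) auto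
  also have "(\<Sum>n. if n \<le> N then Cvec n * c n t else 0) = (\<Sum>n\<le>N. Cvec n * c n t)"
    by (subst suminf_finite[of "{..N}"]) auto
  finally show ?thesis using z_eq_head_trace[of t] t by (simp add: y_def w_def exp_sum_def)
qed

lemma w_weighted_square_le:
  assumes t: "t > 0"
  shows "exp (2 * \<delta> * t) * (w t)^2 \<le> 2 * energy * exp_sum tail_indicator (\<lambda>m. 2 * (\<delta> + \<mu> m)) t"
proof -
  define v where "v m = (if m > N then exp (\<mu> m * t) else 0)" for m
  have wv: "tail_weight m * exp (\<mu> m * t) = tail_weight m * v m" for m by (simp add: tail_weight_def v_def)
  have weight_le: "(tail_weight m)^2 \<le> 2 * (b m)^2" for m by (simp add: tail_weight_def power_mult_distrib)
  have summable_weight: "summable (\<lambda>m. (tail_weight m)^2)"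
    by (rule summable_if_abs_le[of _ "\<lambda>m. 2 * (b m)^2"]) (use weight_le in \<open>auto intro: summable_mult sums_summable[OF b_sums]\<close>)
  have summable_v: "summable (\<lambda>m. (v m)^2)"
  proof (rule summable_if_abs_le)
    show "\<bar>(v m)^2\<bar> \<le> exp ((a - (real m * pi)^2) * (2 * t))" for m
      by (simp add: v_def \<mu>_def lam_def power2_eq_square exp_add[symmetric] algebra_simps)
    show "summable (\<lambda>m. exp ((a - (real m * pi)^2) * (2 * t)))" using t by (intro summable_exp_eigenvalue) simp
  qed
  have "(w t)^2 = (\<Sum>m. tail_weight m * v m)^2" by (simp add: w_def exp_sum_def wv)
  also have "\<dots> \<le> (\<Sum>m. (tail_weight m)^2) * (\<Sum>m. (v m)^2)"
    using summable_w[OF t] by (intro suminf_Cauchy_Schwarz summable_weight summable_v) (simp add: wv)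
  also have "\<dots> \<le> 2 * energy * (\<Sum>m. (v m)^2)"
  proof (intro mult_right_mono suminf_nonneg summable_v)
    have "(\<Sum>m. (tail_weight m)^2) \<le> (\<Sum>m. 2 * (b m)^2)"
      by (intro suminf_le summable_weight summable_mult sums_summable[OF b_sums] weight_le)
    then show "(\<Sum>m. (tail_weight m)^2) \<le> 2 * energy"
      using b_sums by (simp add: suminf_mult sums_summable sums_unique[symmetric])
  qed auto
  finally have "exp (2 * \<delta> * t) * (w t)^2 \<le> exp (2 * \<delta> * t) * (2 * energy * (\<Sum>m. (v m)^2))"
    by (intro mult_left_mono) auto
  also have "exp (2 * \<delta> * t) * (2 * energy * (\<Sum>m. (v m)^2)) = 2 * energy * (\<Sum>m. exp (2 * \<delta> * t) * (v m)^2)"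
    using suminf_mult[OF summable_v, of "exp (2 * \<delta> * t)"] by simp
  also have "(\<Sum>m. exp (2 * \<delta> * t) * (v m)^2) = exp_sum tail_indicator (\<lambda>m. 2 * (\<delta> + \<mu> m)) t"
    unfolding exp_sum_def
    by (intro suminf_cong) (simp add: v_def tail_indicator_def power2_eq_square exp_add[symmetric] algebra_simps)
  finally show ?thesis .
qed

lemma summable_tail_squares:
  assumes t: "t \<ge> 0"
  shows "summable (\<lambda>n. if n \<le> N then 0 else (c n t)^2)"
proof (rule summable_if_abs_le[OF _ sums_summable[OF b_sums]])
  show "\<bar>if n \<le> N then 0 else (c n t)^2\<bar> \<le> (b n)^2" for n
    using abs_c_tail_le[of n t] t by (auto simp: abs_le_square_iff)
qed

lemma tail_modes_decay:
  assumes t: "t \<ge> 0"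
  shows "(\<Sum>n. if n \<le> N then 0 else (c n t)^2) \<le> exp (- 2 * \<delta> * t) * energy"
proof -
  have le: "(if n \<le> N then 0 else (c n t)^2) \<le> exp (- 2 * \<delta> * t) * (b n)^2" for n
  proof (cases "n \<le> N")
    case False
    then have "\<mu> n * t \<le> - \<delta> * t" using \<mu>_tail[of n] t by (intro mult_right_mono) auto
    then have "exp (\<mu> n * t) ^ 2 \<le> exp (- \<delta> * t) ^ 2" by (intro power_mono) auto
    then have "exp (\<mu> n * t) ^ 2 * (b n)^2 \<le> exp (- \<delta> * t) ^ 2 * (b n)^2" by (intro mult_right_mono) auto
    then show ?thesis using False
      by (simp add: c_tail power_mult_distrib exp_of_nat_mult[symmetric] power2_eq_square exp_add[symmetric] algebra_simps)
  qed simp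
  have "(\<Sum>n. if n \<le> N then 0 else (c n t)^2) \<le> (\<Sum>n. exp (- 2 * \<delta> * t) * (b n)^2)"
    by (rule suminf_le[OF le summable_tail_squares[OF t] summable_mult[OF sums_summable[OF b_sums]]])
  also have "\<dots> = exp (- 2 * \<delta> * t) * energy"
    using b_sums by (simp add: suminf_mult sums_summable sums_unique[symmetric])
  finally show ?thesis .
qed

definition E :: "real \<Rightarrow> real \<Rightarrow> real" where
  "E x t = (if t \<le> 0 then e0 x else cos_series (\<lambda>n. c n t) x)"

lemma E_eq_cos_series: "t > 0 \<Longrightarrow> (\<lambda>x. E x t) = cos_series (\<lambda>n. c n t)"
  by (simp add: E_def fun_eq_iff)

lemma E_at_0: "(\<lambda>x. E x 0) = e0"
  by (simp add: E_def fun_eq_iff)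

lemma L2_E: "t \<ge> 0 \<Longrightarrow> L2 (\<lambda>x. E x t)"
  using E_at_0 e0 E_eq_cos_series continuous_on_imp_L2[OF continuous_on_cos_series[OF summable_abs_c]]
  by (cases "t = 0") auto

lemma neumann_coeff_E: "t \<ge> 0 \<Longrightarrow> neumann_coeff (\<lambda>x. E x t) n = c n t"
  using E_at_0 c_at_0 E_eq_cos_series neumann_coeff_cos_series[OF summable_abs_c]
  by (cases "t = 0") (auto simp: b_def)

lemma E_sqdist_sums:
  assumes "t \<ge> 0" "t0 \<ge> 0"
  shows "(\<lambda>n. (c n t - c n t0)^2) sums sqdist_L2 (\<lambda>x. E x t) (\<lambda>x. E x t0)"
proof -
  have "neumann_coeff (\<lambda>x. E x t - E x t0) n = c n t - c n t0" for n
    using neumann_coeff_E[OF assms(1)] neumann_coeff_E[OF assms(2)] assms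
    by (simp add: neumann_coeff_def inner_L2_diff_left L2_E L2_phi)
  moreover have "(\<lambda>n. (neumann_coeff (\<lambda>x. E x t - E x t0) n)^2) sums sqdist_L2 (\<lambda>x. E x t) (\<lambda>x. E x t0)"
    by (rule Parseval[OF L2_diff[OF L2_E[OF assms(1)] L2_E[OF assms(2)]]])
  ultimately show ?thesis by simp
qed

lemma continuous_on_sqdist_c:
  assumes t0: "t0 \<ge> 0"
  shows "continuous_on {0..} (\<lambda>t. \<Sum>n. (c n t - c n t0)^2)"
proof (rule continuous_on_atLeast_if_atLeastAtMost)
  fix T :: real
  let ?T = "max T t0"
  have "\<exists>C. \<forall>t\<in>{0..?T}. \<bar>c n t\<bar> \<le> C" for n
    using continuous_on_interval_abs_bound[OF continuous_on_subset[OF continuous_on_c]] by (metis atLeastAtMost_iff atLeast_iff subsetI)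
  then obtain C where C: "\<And>n t. t \<in> {0..?T} \<Longrightarrow> \<bar>c n t\<bar> \<le> C n" by metis
  show "continuous_on {0..T} (\<lambda>t. \<Sum>n. (c n t - c n t0)^2)"
  proof (rule continuous_on_suminf_Weierstrass)
    show "continuous_on {0..T} (\<lambda>t. (c n t - c n t0)^2)" for n
      by (intro continuous_intros continuous_on_subset[OF continuous_on_c]) auto
    show "\<bar>(c n t - c n t0)^2\<bar> \<le> (if n \<le> N then (2 * C n)^2 else 0) + 4 * (b n)^2" if t: "t \<in> {0..T}" for n t
    proof (cases "n \<le> N")
      case True
      have "\<bar>c n t\<bar> \<le> C n" "\<bar>c n t0\<bar> \<le> C n" using C t t0 by auto
      then have "\<bar>c n t - c n t0\<bar> \<le> 2 * C n" by linarith
      then have "\<bar>c n t - c n t0\<bar>^2 \<le> (2 * C n)^2" by (intro power_mono) auto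
      then show ?thesis using True by (simp add: add_increasing2)
    next
      case False
      have "\<bar>c n t - c n t0\<bar> \<le> 2 * \<bar>b n\<bar>"
        using abs_c_tail_le[of n t] abs_c_tail_le[of n t0] False t t0 by auto
      then have "\<bar>c n t - c n t0\<bar>^2 \<le> (2 * \<bar>b n\<bar>)^2" by (intro power_mono) auto
      then show ?thesis using False by (simp add: power_mult_distrib)
    qed
    show "summable (\<lambda>n. (if n \<le> N then (2 * C n)^2 else 0) + 4 * (b n)^2)"
      by (intro summable_add summable_mult sums_summable[OF b_sums] summable_finite[of "{..N}"]) auto
  qed
qed

lemma E_continuous_L2:
  assumes t0: "t0 \<ge> 0"
  shows "((\<lambda>t. L2norm (\<lambda>x. E x t - E x t0)) \<longlongrightarrow> 0) (at t0 within {0..})"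
proof -
  let ?F = "\<lambda>t. \<Sum>n. (c n t - c n t0)^2"
  have "(?F \<longlongrightarrow> ?F t0) (at t0 within {0..})"
    using continuous_on_sqdist_c[OF t0] t0 unfolding continuous_on_def by blast
  then have "((\<lambda>t. sqrt (?F t)) \<longlongrightarrow> 0) (at t0 within {0..})"
    using tendsto_real_sqrt by fastforce
  moreover have "\<forall>\<^sub>F t in at t0 within {0..}. t \<in> {0..}" by (simp add: eventually_at_filter)
  then have "\<forall>\<^sub>F t in at t0 within {0..}. sqrt (?F t) = L2norm (\<lambda>x. E x t - E x t0)"
    by (rule eventually_mono) (use E_sqdist_sums t0 in \<open>auto simp: L2norm_eq_sqrt_inner_L2 sums_iff\<close>)
  ultimately show ?thesis by (rule Lim_transform_eventually)
qed

theorem E_is_solution: "is_solution a N l e0 E"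
  unfolding is_solution_def
proof (intro conjI allI impI)
  show "L2 (\<lambda>x. E x t)" if "t \<ge> 0" for t using L2_E that .
  show "((\<lambda>t. L2norm (\<lambda>x. E x t - E x t0)) \<longlongrightarrow> 0) (at t0 within {0..})" if "t0 \<ge> 0" for t0
    using E_continuous_L2 that .
  show "L2norm (\<lambda>x. E x 0 - e0 x) = 0" by (simp add: E_def L2norm_def)
  show "continuous_on {0..1} (\<lambda>x. E x t)" if "t > 0" for t
    unfolding E_eq_cos_series[OF that] by (rule continuous_on_cos_series[OF summable_abs_c[OF that]])
  fix n :: nat and t :: real assume t: "t > 0"
  have "((\<lambda>s. integral {0..1} (\<lambda>x. E x s * phi n x)) has_real_derivative
      \<mu> n * c n t + (if n \<le> N then l n else 0) * y t) (at t)"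
    using c_has_derivative[OF t]
  proof (rule has_field_derivative_transform_within_open[where S = "{0<..}"])
    show "c n s = integral {0..1} (\<lambda>x. E x s * phi n x)" if "s \<in> {0<..}" for s
      using neumann_coeff_E[of s n] that by (simp add: neumann_coeff_def inner_L2_def)
  qed (use t in auto)
  moreover have "E 0 t = y t" using E_eq_cos_series[OF t] trace_eq_y[OF t] by (simp add: cos_series_def fun_eq_iff)
  ultimately show "((\<lambda>s. integral {0..1} (\<lambda>x. E x s * phi n x)) has_real_derivative
      (a - lam n) * integral {0..1} (\<lambda>x. E x t * phi n x) + E 0 t * integral {0..1} (\<lambda>x. Lfun N l x * phi n x)) (at t)"
    using neumann_coeff_E[of t n] t neumann_coeff_Lfun[of N l n]
    by (simp add: neumann_coeff_def inner_L2_def \<mu>_def mult.commute)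
qed

lemma sqnorm_L2_E_split:
  assumes t: "t \<ge> 0"
  shows "inner_L2 (\<lambda>x. E x t) (\<lambda>x. E x t) = sqnorm N (\<lambda>i. c i t) + (\<Sum>n. if n \<le> N then 0 else (c n t)^2)"
proof -
  have sums: "(\<lambda>n. (c n t)^2) sums inner_L2 (\<lambda>x. E x t) (\<lambda>x. E x t)"
    using Parseval[OF L2_E[OF t]] neumann_coeff_E[OF t] by simp
  have "inner_L2 (\<lambda>x. E x t) (\<lambda>x. E x t) = (\<Sum>n. (if n \<le> N then (c n t)^2 else 0) + (if n \<le> N then 0 else (c n t)^2))"
    using sums_unique[OF sums] by (simp add: if_distrib cong: if_cong)
  also have "\<dots> = (\<Sum>n. if n \<le> N then (c n t)^2 else 0) + (\<Sum>n. if n \<le> N then 0 else (c n t)^2)"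
    by (rule suminf_add[OF summable_finite[of "{..N}"] summable_tail_squares[OF t], symmetric]) auto
  also have "(\<Sum>n. if n \<le> N then (c n t)^2 else 0) = sqnorm N (\<lambda>i. c i t)"
    unfolding sqnorm_def by (subst suminf_finite[of "{..N}"]) auto
  finally show ?thesis .
qed

end

section \<open>Exponential decay\<close>

locale stable_modal_construction =
  modal_construction a \<delta> N l e0 + observer_error_system a l N Q \<delta> q \<eta>
  for a \<delta> N l e0 Q q \<eta>
begin

text \<open>The head modes \<open>c\<^sub>0, \<dots>, c\<^sub>N\<close> solve \<open>p' = (A + L C) p + L w\<close>, driven by the trace \<open>w\<close>
  of the tail modes.\<close>

lemma head_modes_decay:
  assumes t: "t \<ge> 0"
  shows "sqnorm N (\<lambda>i. c i t) \<le> exp (- 2 * \<delta> * t) * ISS_gain l * (1 + 2 * tail_energy_bound) * energy"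
proof -
  have "sqnorm N (\<lambda>i. c i t)
      \<le> exp (- 2 * \<delta> * t) * ISS_gain l * (sqnorm N (\<lambda>i. c i 0) + 2 * energy * tail_energy_bound)"
  proof (rule input_to_state_estimate[where w = w and \<Phi> = tail_energy])
    fix s :: real and i :: nat assume s: "s > 0" and i: "i \<le> N"
    have "(\<Sum>j\<le>N. ALC a l i j * c j s) = \<mu> i * c i s + l i * (\<Sum>j\<le>N. Cvec j * c j s)"
      using ALC_row[OF i] by (simp add: \<mu>_def)
    then show "(c i has_real_derivative (\<Sum>j\<le>N. ALC a l i j * c j s) + l i * w s) (at s)"
      using c_has_derivative[OF s, of i] i z_eq_head_trace[of s] s by (simp add: y_def algebra_simps)
  next
    show "tail_energy s \<le> tail_energy_bound" if "s \<ge> 0" for s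
      unfolding tail_energy_def tail_energy_bound_def
      by (rule decaying_exp_sum.integral_le[OF decaying_exp_sum_tail that])
    show "(tail_energy has_real_derivative exp_sum tail_indicator (\<lambda>m. 2 * (\<delta> + \<mu> m)) s) (at s)" if "s > 0" for s
      unfolding tail_energy_def by (rule decaying_exp_sum.integral_has_derivative[OF decaying_exp_sum_tail that])
  qed (use t continuous_on_c w_weighted_square_le energy_nonneg
         decaying_exp_sum.continuous_on_integral[OF decaying_exp_sum_tail]
         decaying_exp_sum.integral_at_0[OF decaying_exp_sum_tail] in \<open>auto simp: tail_energy_def\<close>)
  also have "\<dots> \<le> exp (- 2 * \<delta> * t) * ISS_gain l * (energy + 2 * energy * tail_energy_bound)"
    using Bessel_inequality[OF e0, of N] ISS_gain_pos[of l]
    by (intro mult_left_mono add_right_mono) (auto simp: sqnorm_def c_at_0 b_def energy_def)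
  finally show ?thesis by (simp add: algebra_simps)
qed

theorem E_decay:
  assumes t: "t \<ge> 0"
  shows "L2norm (\<lambda>x. E x t)
      \<le> sqrt (ISS_gain l * (1 + 2 * tail_energy_bound) + 1) * exp (- \<delta> * t) * L2norm e0"
proof -
  have "inner_L2 (\<lambda>x. E x t) (\<lambda>x. E x t) \<le> exp (- 2 * \<delta> * t) * (ISS_gain l * (1 + 2 * tail_energy_bound) + 1) * energy"
    using sqnorm_L2_E_split[OF t] head_modes_decay[OF t] tail_modes_decay[OF t]
    by (simp add: algebra_simps)
  also have "\<dots> = (exp (- \<delta> * t))^2 * (ISS_gain l * (1 + 2 * tail_energy_bound) + 1) * energy"
    by (simp add: power2_eq_square exp_add[symmetric])
  finally have "sqrt (inner_L2 (\<lambda>x. E x t) (\<lambda>x. E x t))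
      \<le> sqrt ((exp (- \<delta> * t))^2 * (ISS_gain l * (1 + 2 * tail_energy_bound) + 1) * energy)"
    by (rule real_sqrt_le_mono)
  then show ?thesis
    by (simp add: L2norm_eq_sqrt_inner_L2 energy_def real_sqrt_mult mult_ac)
qed

end

lemma observer_error_system_if_Lyapunov_inequality:
  assumes Q: "pos_def N Q"
    and S: "mat_less N (\<lambda>i j. mmul N Q (ALC a l) i j + mmul N (transp_mat (ALC a l)) Q i j)
                       (\<lambda>i j. - 2 * \<delta> * Q i j)"
  obtains q \<eta> where "observer_error_system a l N Q \<delta> q \<eta>"
proof -
  obtain q where "q > 0" "\<And>x. q * sqnorm N x \<le> quad N Q x" using pos_def_coercive[OF Q] by blast
  moreover obtain \<eta> where "\<eta> > 0" "\<And>x. \<eta> * sqnorm N x \<le>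
      quad N (\<lambda>i j. - 2 * \<delta> * Q i j - (mmul N Q (ALC a l) i j + mmul N (transp_mat (ALC a l)) Q i j)) x"
    using pos_def_coercive S unfolding mat_less_def by blast
  ultimately have "observer_error_system a l N Q \<delta> q \<eta>"
    using Q by unfold_locales (auto simp: pos_def_def)
  then show ?thesis by (rule that)
qed

theorem proposition2:
  fixes a \<delta> :: real and N :: nat and l :: "nat \<Rightarrow> real"
  assumes "\<delta> > 0"
    and "\<forall>n::nat. n > N \<longrightarrow> a - (real n * pi)^2 < - \<delta>"
    and "\<exists>Q. pos_def N Q \<and>
           mat_less N (\<lambda>i j. mmul N Q (ALC a l) i j + mmul N (transp_mat (ALC a l)) Q i j)
                      (\<lambda>i j. - 2 * \<delta> * Q i j)"
  shows "\<exists>M2 > 0. \<forall>e0. L2 e0 \<longrightarrow>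
           (\<exists>e. is_solution a N l e0 e \<and>
                (\<forall>e'. is_solution a N l e0 e' \<longrightarrow> (\<forall>t\<ge>0. L2norm (\<lambda>x. e' x t - e x t) = 0)) \<and>
                (\<forall>t\<ge>0. L2norm (\<lambda>x. e x t) \<le> M2 * exp (- \<delta> * t) * L2norm e0))"
proof -
  obtain Q where "pos_def N Q"
    "mat_less N (\<lambda>i j. mmul N Q (ALC a l) i j + mmul N (transp_mat (ALC a l)) Q i j) (\<lambda>i j. - 2 * \<delta> * Q i j)"
    using assms(3) by blast
  then obtain q \<eta> where "observer_error_system a l N Q \<delta> q \<eta>"
    by (rule observer_error_system_if_Lyapunov_inequality)
  then interpret observer_error_system a l N Q \<delta> q \<eta> .
  interpret tail_stable a \<delta> N
    using assms(1,2) by unfold_locales (auto simp: lam_def)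
  define M2 where "M2 = sqrt (ISS_gain l * (1 + 2 * tail_energy_bound) + 1)"
  have "M2 > 0"
    unfolding M2_def using ISS_gain_pos[of l] tail_energy_bound_nonneg by (simp add: add_nonneg_pos)
  moreover have "\<exists>e. is_solution a N l e0 e \<and>
      (\<forall>e'. is_solution a N l e0 e' \<longrightarrow> (\<forall>t\<ge>0. L2norm (\<lambda>x. e' x t - e x t) = 0)) \<and>
      (\<forall>t\<ge>0. L2norm (\<lambda>x. e x t) \<le> M2 * exp (- \<delta> * t) * L2norm e0)" if e0: "L2 e0" for e0
  proof -
    interpret stable_modal_construction a \<delta> N l e0 Q q \<eta>
      using e0 by unfold_locales
    show ?thesis
      using E_is_solution solution_unique[OF E_is_solution _ e0] E_decay unfolding M2_def by blast
  qed
  ultimately show ?thesis by blast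
qed

end
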